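(* Let $R$ be a P$v$MD. Then: (1) If $I$ is a strong $t$-ideal of $R$, then $E(I)=S\cap T$, where $S=\bigcap_{P\in \mathrm{Min}(I)}R_P$ and $T=\bigcap\{R_M: M\in t\text{-Max}(R),\ M\not\supseteq I\}$. (2) If $P$ is a $t$-prime of $R$ which is not $t$-invertible, then $E(P)=(R:P)=R_P\cap T$, where $T=\bigcap\{R_M: M\in t\text{-Max}(R),\ M\not\supseteq P\}$. (3) If $P$ is a $t$-prime of $R$ which is not $t$-invertible and $R$ satisfies the ascending chain condition on radical $t$-ideals, then $P$ is a $t$-maximal ideal of the domain $E(P)$.
   Context: $R$ is an integral domain with quotient field $K\neq R$. For nonzero $R$-submodules $A,B$ of $K$, $(A:B)=\{x\in K: xB\subseteq A\}$; $E(I)=(I:I)$. For a nonzero fractional ideal $I$, $I_v=(R:(R:I))$, $I_t=\bigcup\{J_v: J\subseteq I\text{ nonzero finitely generated}\}$; $I$ is a $t$-ideal if $I=I_t$; a $t$-prime is a prime $t$-ideal; $t\text{-Max}(R)$ is the set of ideals maximal among proper $t$-ideals. $I$ is $t$-invertible if $(I(R:I))_t=R$. $R$ is a P$v$MD if $R_M$ is a valuation domain for every $M\in t\text{-Max}(R)$. An ideal $J$ is strong (a trace ideal) if $J=I(R:I)$ for some nonzero ideal $I$, equivalently $(J:J)=(R:J)$. $\mathrm{Min}(I)$ is the set of minimal primes of $I$. In (3), $t$-maximality in $E(P)$ refers to the $t$-operation of the domain $E(P)$. *)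

theory Defs
  imports Main
begin

text \<open>Setting: the quotient field K is a type 'k of class field; an integral
domain R with quotient field K is a subset of 'k that is a subring and whose
fractions exhaust 'k. All submodules of K are subsets of 'k.\<close>

definition subring_of :: "'k::field set \<Rightarrow> bool" where
  "subring_of R \<longleftrightarrow> 0 \<in> R \<and> 1 \<in> R \<and> (\<forall>a\<in>R. \<forall>b\<in>R. a + b \<in> R \<and> a * b \<in> R \<and> - a \<in> R)"

definition domain_with_qf :: "'k::field set \<Rightarrow> bool" where
  "domain_with_qf R \<longleftrightarrow> subring_of R \<and>
     (\<forall>x. \<exists>a\<in>R. \<exists>b\<in>R. b \<noteq> 0 \<and> x = a / b)"

definition rspan :: "'k::field set \<Rightarrow> 'k set \<Rightarrow> 'k set" where
  "rspan R S = {x. \<exists>F c. finite F \<and> F \<subseteq> S \<and> (\<forall>s\<in>F. c s \<in> R) \<and> x = (\<Sum>s\<in>F. c s * s)}"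

definition prod_sub :: "'k::field set \<Rightarrow> 'k set \<Rightarrow> 'k set \<Rightarrow> 'k set" where
  "prod_sub R A B = rspan R {a * b | a b. a \<in> A \<and> b \<in> B}"

definition colon :: "'k::field set \<Rightarrow> 'k set \<Rightarrow> 'k set" where
  "colon A B = {x. \<forall>b\<in>B. x * b \<in> A}"

definition Eend :: "'k::field set \<Rightarrow> 'k set" where
  "Eend I = colon I I"

definition vcl :: "'k::field set \<Rightarrow> 'k set \<Rightarrow> 'k set" where
  "vcl R I = colon R (colon R I)"

definition fin_gen :: "'k::field set \<Rightarrow> 'k set \<Rightarrow> bool" where
  "fin_gen R J \<longleftrightarrow> (\<exists>F. finite F \<and> J = rspan R F)"

definition tcl :: "'k::field set \<Rightarrow> 'k set \<Rightarrow> 'k set" where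
  "tcl R I = \<Union>{vcl R J | J. J \<subseteq> I \<and> J \<noteq> {0} \<and> fin_gen R J}"

definition ideal_of :: "'k::field set \<Rightarrow> 'k set \<Rightarrow> bool" where
  "ideal_of R I \<longleftrightarrow> I \<subseteq> R \<and> 0 \<in> I \<and> (\<forall>a\<in>I. \<forall>b\<in>I. a + b \<in> I) \<and> (\<forall>r\<in>R. \<forall>a\<in>I. r * a \<in> I)"

definition prime_of :: "'k::field set \<Rightarrow> 'k set \<Rightarrow> bool" where
  "prime_of R P \<longleftrightarrow> ideal_of R P \<and> P \<noteq> R \<and> (\<forall>a\<in>R. \<forall>b\<in>R. a * b \<in> P \<longrightarrow> a \<in> P \<or> b \<in> P)"

definition radical_of :: "'k::field set \<Rightarrow> 'k set \<Rightarrow> bool" where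
  "radical_of R I \<longleftrightarrow> ideal_of R I \<and> (\<forall>x\<in>R. \<forall>n::nat. x ^ n \<in> I \<longrightarrow> x \<in> I)"

definition t_ideal :: "'k::field set \<Rightarrow> 'k set \<Rightarrow> bool" where
  "t_ideal R I \<longleftrightarrow> ideal_of R I \<and> I \<noteq> {0} \<and> I = tcl R I"

definition t_prime :: "'k::field set \<Rightarrow> 'k set \<Rightarrow> bool" where
  "t_prime R P \<longleftrightarrow> prime_of R P \<and> t_ideal R P"

definition tMax :: "'k::field set \<Rightarrow> 'k set set" where
  "tMax R = {M. t_ideal R M \<and> M \<noteq> R \<and>
      (\<forall>N. t_ideal R N \<and> N \<noteq> R \<and> M \<subseteq> N \<longrightarrow> N = M)}"

definition t_invertible :: "'k::field set \<Rightarrow> 'k set \<Rightarrow> bool" where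
  "t_invertible R I \<longleftrightarrow> tcl R (prod_sub R I (colon R I)) = R"

definition localization :: "'k::field set \<Rightarrow> 'k set \<Rightarrow> 'k set" where
  "localization R P = {a / s | a s. a \<in> R \<and> s \<in> R \<and> s \<notin> P}"

definition valuation_domain :: "'k::field set \<Rightarrow> bool" where
  "valuation_domain V \<longleftrightarrow> (\<forall>x. x \<noteq> 0 \<longrightarrow> x \<in> V \<or> inverse x \<in> V)"

definition PvMD :: "'k::field set \<Rightarrow> bool" where
  "PvMD R \<longleftrightarrow> domain_with_qf R \<and> (\<forall>M\<in>tMax R. valuation_domain (localization R M))"

definition strong_ideal :: "'k::field set \<Rightarrow> 'k set \<Rightarrow> bool" where
  "strong_ideal R J \<longleftrightarrow> (\<exists>I. ideal_of R I \<and> I \<noteq> {0} \<and> J = prod_sub R I (colon R I))"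

definition Min_primes :: "'k::field set \<Rightarrow> 'k set \<Rightarrow> 'k set set" where
  "Min_primes R I = {P. prime_of R P \<and> I \<subseteq> P \<and>
      (\<forall>Q. prime_of R Q \<and> I \<subseteq> Q \<and> Q \<subseteq> P \<longrightarrow> Q = P)}"

definition acc_radical_t :: "'k::field set \<Rightarrow> bool" where
  "acc_radical_t R \<longleftrightarrow> (\<forall>C::nat \<Rightarrow> 'k set.
      (\<forall>n. radical_of R (C n) \<and> t_ideal R (C n)) \<and> (\<forall>n. C n \<subseteq> C (Suc n))
      \<longrightarrow> (\<exists>N. \<forall>n\<ge>N. C n = C N))"

end

theory Submission
  imports Defs
begin

text \<open>
  In a PvMD the localizations \<open>R\<^sub>M\<close> at t-maximal ideals \<open>M\<close> are valuation domains with
  intersection \<open>R\<close>, so all three statements are proved by testing membership in such rings.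

  (1) If \<open>x \<in> E(I)\<close> and \<open>P \<in> Min(I)\<close>, then \<open>P\<close> is a t-prime, so \<open>R\<^sub>P\<close> is a valuation domain;
  if \<open>x \<notin> R\<^sub>P\<close> then \<open>x\<inverse> = a/u\<close> with \<open>a \<in> P\<close>, and \<open>s a\<^sup>k \<in> I\<close> with \<open>s \<notin> P\<close> gives \<open>s u\<^sup>k \<in> P\<close>.
  Conversely, for \<open>x \<in> S \<inter> T\<close> and \<open>a \<in> I\<close> we get \<open>x a \<in> R\<^sub>M\<close> for every t-maximal \<open>M\<close>: when
  \<open>I \<subseteq> M\<close>, the primes below \<open>M\<close> form a chain, so some \<open>Q \<in> Min(I)\<close> lies below \<open>M\<close>, and
  \<open>Q R\<^sub>Q \<subseteq> R\<^sub>M\<close>. Hence \<open>S \<inter> T \<subseteq> (R:I)\<close>, and \<open>(R:I) = E(I)\<close> for a strong ideal.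

  (2) \<open>P(R:P)\<close> lies in some t-maximal \<open>M\<close>, and a computation in the valuation domain \<open>R\<^sub>M\<close>
  shows \<open>x P \<subseteq> P\<close> for \<open>x \<in> (R:P)\<close>; then (1) applies, with \<open>Min(P) = {P}\<close>.

  (3) \<open>P\<close> is a t-ideal of \<open>E = E(P) = R\<^sub>P \<inter> T\<close> because \<open>R\<^sub>P\<close> is a valuation domain. The ACC
  yields a finite \<open>F\<^sub>0 \<subseteq> P\<close> such that every t-maximal ideal containing \<open>F\<^sub>0\<close> contains \<open>P\<close>;
  then for \<open>y\<close> in a t-ideal \<open>N \<supset> P\<close> of \<open>E\<close> with \<open>y \<notin> P\<close> one gets \<open>(E : F\<^sub>0 \<union> {y}) = E\<close>,
  so \<open>1 \<in> N\<close>.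
\<close>

lemma ideal_ofD:
  assumes "ideal_of R I"
  shows "I \<subseteq> R" "0 \<in> I" "a \<in> I \<Longrightarrow> b \<in> I \<Longrightarrow> a + b \<in> I" "r \<in> R \<Longrightarrow> a \<in> I \<Longrightarrow> r * a \<in> I"
  using assms unfolding ideal_of_def by auto

lemma ideal_mult_right: "ideal_of R I \<Longrightarrow> r \<in> R \<Longrightarrow> a \<in> I \<Longrightarrow> a * r \<in> I"
  using ideal_ofD(4) by (metis mult.commute)

lemma ideal_sum:
  assumes "ideal_of R I" "finite F" "\<And>s. s \<in> F \<Longrightarrow> g s \<in> I"
  shows "sum g F \<in> I"
  using assms(2,3) by (induction F rule: finite_induct) (simp_all add: ideal_ofD[OF assms(1)])

lemma prime_ofD:
  assumes "prime_of R P"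
  shows "ideal_of R P" "P \<noteq> R" "a \<in> R \<Longrightarrow> b \<in> R \<Longrightarrow> a * b \<in> P \<Longrightarrow> a \<in> P \<or> b \<in> P"
  using assms unfolding prime_of_def by auto

lemma prime_mult_notin:
  "prime_of R P \<Longrightarrow> a \<in> R \<Longrightarrow> b \<in> R \<Longrightarrow> a \<notin> P \<Longrightarrow> b \<notin> P \<Longrightarrow> a * b \<notin> P"
  unfolding prime_of_def by blast

lemma nonzero_if_notin_ideal: "ideal_of R P \<Longrightarrow> s \<notin> P \<Longrightarrow> s \<noteq> 0"
  using ideal_ofD(2) by blast

lemma t_idealE:
  assumes "t_ideal R I"
  shows "ideal_of R I" "tcl R I = I" "\<exists>a\<in>I. a \<noteq> 0"
proof -
  show "ideal_of R I" "tcl R I = I" using assms unfolding t_ideal_def by auto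
  then show "\<exists>a\<in>I. a \<noteq> 0" using assms ideal_ofD(2) unfolding t_ideal_def by blast
qed

lemma tMaxD:
  assumes "M \<in> tMax R"
  shows "t_ideal R M" "M \<noteq> R" "\<And>N. t_ideal R N \<Longrightarrow> N \<noteq> R \<Longrightarrow> M \<subseteq> N \<Longrightarrow> N = M"
  using assms unfolding tMax_def by auto

lemma tMax_ideal: "M \<in> tMax R \<Longrightarrow> ideal_of R M"
  using tMaxD(1) t_idealE(1) by blast

lemma Min_primesD:
  assumes "P \<in> Min_primes R I"
  shows "prime_of R P" "I \<subseteq> P" "\<And>Q. prime_of R Q \<Longrightarrow> I \<subseteq> Q \<Longrightarrow> Q \<subseteq> P \<Longrightarrow> Q = P"
  using assms unfolding Min_primes_def by auto

lemma Min_primes_prime: "prime_of R P \<Longrightarrow> Min_primes R P = {P}"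
  unfolding Min_primes_def by blast

lemma rspanI:
  "finite F \<Longrightarrow> F \<subseteq> S \<Longrightarrow> (\<forall>s\<in>F. c s \<in> R) \<Longrightarrow> x = (\<Sum>s\<in>F. c s * s) \<Longrightarrow> x \<in> rspan R S"
  unfolding rspan_def by blast

lemma rspanE:
  assumes "x \<in> rspan R S"
  obtains F c where "finite F" "F \<subseteq> S" "\<forall>s\<in>F. c s \<in> R" "x = (\<Sum>s\<in>F. c s * s)"
  using assms unfolding rspan_def by blast

lemma zero_in_rspan: "0 \<in> rspan R S"
  by (rule rspanI[of "{}"]) auto

lemma rspan_image_mult:
  assumes "x \<in> rspan R S" "\<And>g. g \<in> S \<Longrightarrow> a * g \<in> S"
  shows "a * x \<in> rspan R S"
proof (cases "a = 0")
  case True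
  then show ?thesis using zero_in_rspan by simp
next
  case False
  obtain F c where F: "finite F" "F \<subseteq> S" "\<forall>s\<in>F. c s \<in> R" "x = (\<Sum>s\<in>F. c s * s)"
    using assms(1) by (rule rspanE)
  have "inj_on ((*) a) F" using False by (auto intro: inj_onI)
  then have "(\<Sum>t\<in>(*) a ` F. c (t / a) * t) = (\<Sum>s\<in>F. c (a * s / a) * (a * s))"
    by (simp add: sum.reindex)
  also have "\<dots> = a * x" using F False by (simp add: sum_distrib_left algebra_simps)
  finally show ?thesis
    using F False assms(2) by (intro rspanI[of "(*) a ` F" _ "\<lambda>t. c (t / a)"]) auto
qed

lemma colon_iff: "x \<in> colon A B \<longleftrightarrow> (\<forall>b\<in>B. x * b \<in> A)"
  unfolding colon_def by simp

lemma vcl_iff: "y \<in> vcl R F \<longleftrightarrow> (\<forall>z. (\<forall>f\<in>F. z * f \<in> R) \<longrightarrow> y * z \<in> R)"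
  unfolding vcl_def colon_def by (auto simp: mult.commute)

lemma vclD: "y \<in> vcl R F \<Longrightarrow> (\<And>f. f \<in> F \<Longrightarrow> z * f \<in> R) \<Longrightarrow> y * z \<in> R"
  unfolding vcl_iff by blast

lemma vclI: "(\<And>z. (\<And>f. f \<in> F \<Longrightarrow> z * f \<in> R) \<Longrightarrow> y * z \<in> R) \<Longrightarrow> y \<in> vcl R F"
  unfolding vcl_iff by blast

lemma subset_vcl: "F \<subseteq> vcl R F"
  unfolding subset_eq vcl_iff by (metis mult.commute)

lemma vcl_mono: "F \<subseteq> G \<Longrightarrow> vcl R F \<subseteq> vcl R G"
  unfolding subset_iff vcl_iff by blast

lemma vcl_idem: "vcl R (vcl R F) = vcl R F"
proof
  show "vcl R (vcl R F) \<subseteq> vcl R F"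
  proof
    fix y assume y: "y \<in> vcl R (vcl R F)"
    show "y \<in> vcl R F"
    proof (rule vclI)
      fix z assume z: "\<And>f. f \<in> F \<Longrightarrow> z * f \<in> R"
      have "z * w \<in> R" if "w \<in> vcl R F" for w
        using vclD[OF that z] by (simp add: mult.commute)
      then show "y * z \<in> R" using vclD[OF y] by blast
    qed
  qed
qed (rule subset_vcl)

lemma vcl_image_mult:
  assumes "y \<in> vcl R F"
  shows "s * y \<in> vcl R ((*) s ` F)"
proof (rule vclI)
  fix z assume z: "\<And>g. g \<in> (*) s ` F \<Longrightarrow> z * g \<in> R"
  have "(z * s) * f \<in> R" if "f \<in> F" for f
    using z[OF imageI[OF that]] by (simp add: mult.assoc)
  then have "y * (z * s) \<in> R" using vclD assms by blast
  then show "(s * y) * z \<in> R" by (simp add: algebra_simps)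
qed

lemma one_in_vcl_iff: "1 \<in> vcl R F \<longleftrightarrow> colon R F \<subseteq> R"
  by (auto simp: vcl_iff colon_iff)

lemma localizationI: "a \<in> R \<Longrightarrow> s \<in> R \<Longrightarrow> s \<notin> P \<Longrightarrow> a / s \<in> localization R P"
  unfolding localization_def by blast

lemma localizationE:
  assumes "x \<in> localization R P"
  obtains a s where "a \<in> R" "s \<in> R" "s \<notin> P" "x = a / s"
  using assms unfolding localization_def by blast

lemma localization_antimono: "P \<subseteq> Q \<Longrightarrow> localization R Q \<subseteq> localization R P"
  unfolding localization_def by blast

lemma valuation_domainD: "valuation_domain V \<Longrightarrow> x \<noteq> 0 \<Longrightarrow> x \<notin> V \<Longrightarrow> inverse x \<in> V"
  unfolding valuation_domain_def by blast

lemma valuation_domain_mono: "valuation_domain V \<Longrightarrow> V \<subseteq> W \<Longrightarrow> valuation_domain W"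
  unfolding valuation_domain_def by blast

lemma Eend_iff: "x \<in> Eend I \<longleftrightarrow> (\<forall>i\<in>I. x * i \<in> I)"
  unfolding Eend_def colon_iff ..

lemma Eend_power: "x \<in> Eend I \<Longrightarrow> i \<in> I \<Longrightarrow> x ^ k * i \<in> I"
proof (induction k)
  case (Suc k)
  then have "x * (x ^ k * i) \<in> I" by (simp add: Eend_iff)
  then show ?case by (simp add: mult.assoc)
qed simp

lemma Eend_subset_colon: "I \<subseteq> R \<Longrightarrow> Eend I \<subseteq> colon R I"
  unfolding Eend_def colon_def by blast

section \<open>Subrings of a field and the t-operation\<close>

locale field_subring =
  fixes R :: "'k::field set"
  assumes subring: "subring_of R"
begin

lemma zero_closed: "0 \<in> R"
  and one_closed: "1 \<in> R"
  and add_closed: "a \<in> R \<Longrightarrow> b \<in> R \<Longrightarrow> a + b \<in> R"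
  and mult_closed: "a \<in> R \<Longrightarrow> b \<in> R \<Longrightarrow> a * b \<in> R"
  and uminus_closed: "a \<in> R \<Longrightarrow> - a \<in> R"
  using subring unfolding subring_of_def by auto

lemma sum_closed: "finite F \<Longrightarrow> (\<And>s. s \<in> F \<Longrightarrow> g s \<in> R) \<Longrightarrow> sum g F \<in> R"
  by (induction F rule: finite_induct) (simp_all add: zero_closed add_closed)

lemma power_closed: "a \<in> R \<Longrightarrow> a ^ n \<in> R"
  by (induction n) (simp_all add: one_closed mult_closed)

lemma ideal_eq_carrier_if_one: "ideal_of R I \<Longrightarrow> 1 \<in> I \<Longrightarrow> I = R"
  using ideal_ofD[of R I] one_closed by (metis mult.right_neutral subsetI subset_antisym)

lemma ideal_uminus: "ideal_of R I \<Longrightarrow> a \<in> I \<Longrightarrow> - a \<in> I"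
  using ideal_ofD(4)[of R I "-1" a] one_closed uminus_closed by simp

lemma ideal_carrier: "ideal_of R R"
  unfolding ideal_of_def using zero_closed add_closed mult_closed by blast

lemma prime_one_notin: "prime_of R P \<Longrightarrow> 1 \<notin> P"
  using ideal_eq_carrier_if_one prime_ofD(1,2) by blast

lemma prime_power_mem: "prime_of R P \<Longrightarrow> y \<in> R \<Longrightarrow> y ^ k \<in> P \<Longrightarrow> y \<in> P"
proof (induction k)
  case 0
  then show ?case using prime_one_notin by simp
next
  case (Suc k)
  then show ?case using prime_ofD(3) power_closed by (metis power_Suc)
qed

lemma chain_Union_ideal:
  assumes "C \<noteq> {}" "\<And>N. N \<in> C \<Longrightarrow> ideal_of R N" "subset.chain A C"
  shows "ideal_of R (\<Union>C)"
  unfolding ideal_of_def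
proof (intro conjI ballI)
  show "\<Union>C \<subseteq> R" "0 \<in> \<Union>C" using assms(1,2) ideal_ofD(1,2) by blast+
next
  fix x y assume "x \<in> \<Union>C" "y \<in> \<Union>C"
  then obtain X Y where XY: "X \<in> C" "Y \<in> C" "x \<in> X" "y \<in> Y" by blast
  with assms(3) have "X \<subseteq> Y \<or> Y \<subseteq> X" by (auto simp: subset_chain_def)
  then show "x + y \<in> \<Union>C" using XY assms(2) ideal_ofD(3) by blast
next
  fix r x assume "r \<in> R" "x \<in> \<Union>C"
  then show "r * x \<in> \<Union>C" using assms(2) ideal_ofD(4) by blast
qed

lemma Inter_ideal:
  assumes "C \<noteq> {}" "\<And>N. N \<in> C \<Longrightarrow> ideal_of R N"
  shows "ideal_of R (\<Inter>C)"
  unfolding ideal_of_def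
proof (intro conjI ballI)
  show "\<Inter>C \<subseteq> R" "0 \<in> \<Inter>C" using assms ideal_ofD(1,2) by blast+
qed (use assms ideal_ofD(3,4) in blast)+

lemma ideal_adjoin:
  assumes Q: "ideal_of R Q" and a: "a \<in> R"
  shows "ideal_of R {q + r * a | q r. q \<in> Q \<and> r \<in> R}" (is "ideal_of R ?Qa")
  unfolding ideal_of_def
proof (intro conjI ballI)
  show "?Qa \<subseteq> R" using ideal_ofD(1)[OF Q] add_closed mult_closed a by blast
  have "0 = 0 + 0 * a" by simp
  then show "0 \<in> ?Qa" using ideal_ofD(2)[OF Q] zero_closed by blast
next
  fix x y assume "x \<in> ?Qa" "y \<in> ?Qa"
  then obtain q1 r1 q2 r2 where "q1 \<in> Q" "r1 \<in> R" "q2 \<in> Q" "r2 \<in> R"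
    and "x + y = (q1 + q2) + (r1 + r2) * a"
    by (auto simp: algebra_simps)
  then show "x + y \<in> ?Qa" using ideal_ofD(3)[OF Q] add_closed by blast
next
  fix s x assume "s \<in> R" "x \<in> ?Qa"
  then obtain q r where "q \<in> Q" "r \<in> R" "s * x = s * q + (s * r) * a"
    by (auto simp: algebra_simps)
  then show "s * x \<in> ?Qa" using ideal_ofD(4)[OF Q \<open>s \<in> R\<close>] mult_closed[OF \<open>s \<in> R\<close>] by blast
qed

lemma rspan_superset: "S \<subseteq> rspan R S"
proof
  fix s assume "s \<in> S"
  then show "s \<in> rspan R S" by (intro rspanI[of "{s}" _ "\<lambda>_. 1"]) (auto simp: one_closed)
qed

lemma rspan_subset_ideal:
  assumes "ideal_of R I" "S \<subseteq> I"
  shows "rspan R S \<subseteq> I"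
proof
  fix x assume "x \<in> rspan R S"
  then obtain F c where "finite F" "F \<subseteq> S" "\<forall>s\<in>F. c s \<in> R" "x = (\<Sum>s\<in>F. c s * s)"
    by (rule rspanE)
  then show "x \<in> I" using assms by (auto intro!: ideal_sum ideal_ofD(4))
qed

lemma rspan_add:
  assumes "x \<in> rspan R S" "y \<in> rspan R S"
  shows "x + y \<in> rspan R S"
proof -
  obtain F1 c1 where 1: "finite F1" "F1 \<subseteq> S" "\<forall>s\<in>F1. c1 s \<in> R" "x = (\<Sum>s\<in>F1. c1 s * s)"
    using assms(1) by (rule rspanE)
  obtain F2 c2 where 2: "finite F2" "F2 \<subseteq> S" "\<forall>s\<in>F2. c2 s \<in> R" "y = (\<Sum>s\<in>F2. c2 s * s)"
    using assms(2) by (rule rspanE)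
  define c where "c s = (if s \<in> F1 then c1 s else 0) + (if s \<in> F2 then c2 s else 0)" for s
  have "(\<Sum>s\<in>F1 \<union> F2. c s * s)
      = (\<Sum>s\<in>F1 \<union> F2. if s \<in> F1 then c1 s * s else 0) + (\<Sum>s\<in>F1 \<union> F2. if s \<in> F2 then c2 s * s else 0)"
    unfolding c_def sum.distrib[symmetric] by (rule sum.cong) (auto simp: distrib_right)
  also have "\<dots> = x + y"
    using 1 2 by (simp add: sum.inter_restrict[symmetric] Int_absorb1)
  finally show ?thesis
    using 1 2 by (intro rspanI[of "F1 \<union> F2" _ c]) (auto simp: c_def zero_closed add_closed)
qed

lemma rspan_ideal: "S \<subseteq> R \<Longrightarrow> ideal_of R (rspan R S)"
  unfolding ideal_of_def
proof (intro conjI ballI)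
  assume "S \<subseteq> R"
  then show "rspan R S \<subseteq> R"
    using rspan_subset_ideal[OF ideal_carrier] by blast
next
  fix r x assume "r \<in> R" "x \<in> rspan R S"
  then obtain F c where F: "finite F" "F \<subseteq> S" "\<forall>s\<in>F. c s \<in> R" "x = (\<Sum>s\<in>F. c s * s)"
    by (auto elim: rspanE)
  then have "r * x = (\<Sum>s\<in>F. (r * c s) * s)" by (simp add: sum_distrib_left mult.assoc)
  then show "r * x \<in> rspan R S" using F \<open>r \<in> R\<close> by (intro rspanI[of F]) (auto simp: mult_closed)
qed (auto simp: zero_in_rspan rspan_add)

lemma rspan_eq_zero_iff: "rspan R F = {0} \<longleftrightarrow> (\<forall>f\<in>F. f = 0)"
proof
  assume "\<forall>f\<in>F. f = 0"
  have "x = 0" if "x \<in> rspan R F" for x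
  proof -
    obtain G c where "G \<subseteq> F" "x = (\<Sum>s\<in>G. c s * s)"
      using \<open>x \<in> rspan R F\<close> by (rule rspanE)
    with \<open>\<forall>f\<in>F. f = 0\<close> show "x = 0" by (auto intro!: sum.neutral)
  qed
  then show "rspan R F = {0}" using zero_in_rspan by blast
qed (use rspan_superset in blast)

lemma colon_rspan: "colon R (rspan R F) = colon R F"
proof
  show "colon R (rspan R F) \<subseteq> colon R F"
    using rspan_superset unfolding colon_def by blast
  show "colon R F \<subseteq> colon R (rspan R F)"
  proof
    fix x assume x: "x \<in> colon R F"
    show "x \<in> colon R (rspan R F)" unfolding colon_iff
    proof
      fix b assume "b \<in> rspan R F"
      then obtain G c where G: "finite G" "G \<subseteq> F" "\<forall>s\<in>G. c s \<in> R" "b = (\<Sum>s\<in>G. c s * s)"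
        by (rule rspanE)
      then have "x * b = (\<Sum>s\<in>G. c s * (x * s))" by (simp add: sum_distrib_left algebra_simps)
      also have "\<dots> \<in> R"
      proof (rule sum_closed[OF G(1)])
        fix s assume "s \<in> G"
        then show "c s * (x * s) \<in> R" using G x by (auto simp: colon_iff intro: mult_closed)
      qed
      finally show "x * b \<in> R" .
    qed
  qed
qed

lemma vcl_rspan: "vcl R (rspan R F) = vcl R F"
  unfolding vcl_def by (simp add: colon_rspan)

lemma vcl_subset: "F \<subseteq> R \<Longrightarrow> vcl R F \<subseteq> R"
  using vclD[of _ R F 1] by auto

lemma vcl_add: "a \<in> vcl R F \<Longrightarrow> b \<in> vcl R F \<Longrightarrow> a + b \<in> vcl R F"
  unfolding vcl_iff by (simp add: distrib_right add_closed)

lemma vcl_mult: "r \<in> R \<Longrightarrow> a \<in> vcl R F \<Longrightarrow> r * a \<in> vcl R F"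
  unfolding vcl_iff by (simp add: mult.assoc mult_closed)

lemma tcl_iff:
  assumes "ideal_of R I"
  shows "y \<in> tcl R I \<longleftrightarrow> (\<exists>F. finite F \<and> F \<subseteq> I \<and> (\<exists>f\<in>F. f \<noteq> 0) \<and> y \<in> vcl R F)"
proof
  assume "y \<in> tcl R I"
  then obtain J where J: "J \<subseteq> I" "J \<noteq> {0}" "fin_gen R J" "y \<in> vcl R J"
    unfolding tcl_def by blast
  then obtain F where "finite F" "J = rspan R F" unfolding fin_gen_def by blast
  moreover have "F \<subseteq> I" using J \<open>J = rspan R F\<close> rspan_superset by blast
  moreover have "\<exists>f\<in>F. f \<noteq> 0" using J \<open>J = rspan R F\<close> rspan_eq_zero_iff by blast
  moreover have "y \<in> vcl R F" using J \<open>J = rspan R F\<close> vcl_rspan by simp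
  ultimately show "\<exists>F. finite F \<and> F \<subseteq> I \<and> (\<exists>f\<in>F. f \<noteq> 0) \<and> y \<in> vcl R F" by blast
next
  assume "\<exists>F. finite F \<and> F \<subseteq> I \<and> (\<exists>f\<in>F. f \<noteq> 0) \<and> y \<in> vcl R F"
  then obtain F where F: "finite F" "F \<subseteq> I" "\<exists>f\<in>F. f \<noteq> 0" "y \<in> vcl R F" by blast
  have "rspan R F \<subseteq> I" using rspan_subset_ideal[OF assms F(2)] .
  moreover have "rspan R F \<noteq> {0}" using F(3) rspan_eq_zero_iff by blast
  moreover have "fin_gen R (rspan R F)" using F(1) unfolding fin_gen_def by blast
  moreover have "y \<in> vcl R (rspan R F)" using F(4) vcl_rspan by simp
  ultimately show "y \<in> tcl R I" unfolding tcl_def by blast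
qed

lemma tclI:
  "ideal_of R I \<Longrightarrow> finite F \<Longrightarrow> F \<subseteq> I \<Longrightarrow> f \<in> F \<Longrightarrow> f \<noteq> 0 \<Longrightarrow> y \<in> vcl R F \<Longrightarrow> y \<in> tcl R I"
  using tcl_iff[of I y] by blast

lemma tclE:
  assumes "ideal_of R I" "y \<in> tcl R I"
  obtains F where "finite F" "F \<subseteq> I" "\<exists>f\<in>F. f \<noteq> 0" "y \<in> vcl R F"
  using assms tcl_iff[of I y] by blast

lemma subset_tcl:
  assumes "ideal_of R I" "a \<in> I" "a \<noteq> 0"
  shows "I \<subseteq> tcl R I"
proof
  fix x assume "x \<in> I"
  then have "{a, x} \<subseteq> I" "x \<in> vcl R {a, x}" using assms(2) subset_vcl[of "{a, x}" R] by auto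
  then show "x \<in> tcl R I" using tclI[OF assms(1), of "{a, x}" a x] assms(3) by blast
qed

lemma tcl_subset:
  assumes "ideal_of R I"
  shows "tcl R I \<subseteq> R"
proof
  fix y assume "y \<in> tcl R I"
  with assms obtain F where "F \<subseteq> I" "y \<in> vcl R F" by (rule tclE)
  then show "y \<in> R" using vcl_subset ideal_ofD(1)[OF assms] by blast
qed

lemma t_ideal_vcl_subset:
  assumes "t_ideal R I" "finite F" "F \<subseteq> I" "\<exists>f\<in>F. f \<noteq> 0"
  shows "vcl R F \<subseteq> I"
proof
  fix y assume "y \<in> vcl R F"
  then have "y \<in> tcl R I" using assms(2-4) tclI[OF t_idealE(1)[OF assms(1)]] by blast
  then show "y \<in> I" using t_idealE(2)[OF assms(1)] by simp
qed

lemma t_idealI: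
  assumes "ideal_of R I" "a \<in> I" "a \<noteq> 0"
    and "\<And>F. finite F \<Longrightarrow> F \<subseteq> I \<Longrightarrow> \<exists>f\<in>F. f \<noteq> 0 \<Longrightarrow> vcl R F \<subseteq> I"
  shows "t_ideal R I"
proof -
  have "tcl R I \<subseteq> I"
  proof
    fix y assume "y \<in> tcl R I"
    with assms(1) obtain F where "finite F" "F \<subseteq> I" "\<exists>f\<in>F. f \<noteq> 0" "y \<in> vcl R F"
      by (rule tclE)
    with assms(4) show "y \<in> I" by blast
  qed
  then show ?thesis
    unfolding t_ideal_def using assms(1-3) subset_tcl by blast
qed

lemma t_ideal_carrier: "t_ideal R R"
  by (rule t_idealI[OF ideal_carrier one_closed]) (simp_all add: vcl_subset)

lemma tcl_ideal:
  assumes "ideal_of R I" "a \<in> I" "a \<noteq> 0"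
  shows "ideal_of R (tcl R I)"
  unfolding ideal_of_def
proof (intro conjI ballI)
  show "tcl R I \<subseteq> R" using tcl_subset[OF assms(1)] .
  show "0 \<in> tcl R I" using subset_tcl[OF assms] ideal_ofD(2)[OF assms(1)] by blast
next
  fix x y assume "x \<in> tcl R I" "y \<in> tcl R I"
  then obtain F G where F: "finite F" "F \<subseteq> I" "\<exists>f\<in>F. f \<noteq> 0" "x \<in> vcl R F"
    and G: "finite G" "G \<subseteq> I" "y \<in> vcl R G"
    using tclE[OF assms(1)] by metis
  have "x \<in> vcl R (F \<union> G)" "y \<in> vcl R (F \<union> G)"
    using F(4) G(3) vcl_mono[of F "F \<union> G"] vcl_mono[of G "F \<union> G"] by blast+
  then have "x + y \<in> vcl R (F \<union> G)" by (rule vcl_add)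
  moreover obtain f where "f \<in> F" "f \<noteq> 0" using F(3) by blast
  ultimately show "x + y \<in> tcl R I" using F G by (intro tclI[OF assms(1), of "F \<union> G" f]) auto
next
  fix r x assume "r \<in> R" "x \<in> tcl R I"
  then obtain F f where "finite F" "F \<subseteq> I" "f \<in> F" "f \<noteq> 0" "x \<in> vcl R F"
    using tclE[OF assms(1)] by metis
  then show "r * x \<in> tcl R I" using vcl_mult[OF \<open>r \<in> R\<close>] tclI[OF assms(1)] by blast
qed

lemma tcl_idem:
  assumes "ideal_of R I" "a \<in> I" "a \<noteq> 0"
  shows "tcl R (tcl R I) = tcl R I"
proof
  have ideal: "ideal_of R (tcl R I)" using tcl_ideal[OF assms] .
  show "tcl R I \<subseteq> tcl R (tcl R I)"
    using subset_tcl[OF ideal] subset_tcl[OF assms] assms(2,3) by blast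
  show "tcl R (tcl R I) \<subseteq> tcl R I"
  proof
    fix y assume "y \<in> tcl R (tcl R I)"
    then obtain F where F: "finite F" "F \<subseteq> tcl R I" "y \<in> vcl R F"
      using tclE[OF ideal] by metis
    then obtain g where g: "\<And>x. x \<in> F \<Longrightarrow> finite (g x) \<and> g x \<subseteq> I \<and> x \<in> vcl R (g x)"
      using tcl_iff[OF assms(1)] by (metis subsetD)
    define G where "G = insert a (\<Union>x\<in>F. g x)"
    have G: "finite G" "G \<subseteq> I" using F g assms(2) unfolding G_def by auto
    have "F \<subseteq> vcl R G"
      using g vcl_mono[of _ G] unfolding G_def by blast
    then have "y \<in> vcl R G" using F(3) vcl_mono vcl_idem by blast
    then show "y \<in> tcl R I" using tclI[OF assms(1) G, of a] assms unfolding G_def by blast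
  qed
qed

lemma t_ideal_tcl:
  assumes "ideal_of R I" "a \<in> I" "a \<noteq> 0"
  shows "t_ideal R (tcl R I)"
  unfolding t_ideal_def
  using tcl_ideal[OF assms] tcl_idem[OF assms] subset_tcl[OF assms] assms(2,3) by auto

lemma t_ideal_conductor:
  assumes J: "t_ideal R J" and x: "x \<noteq> 0" and d: "d \<in> R" "d \<noteq> 0" "d * x \<in> J"
  shows "t_ideal R {r \<in> R. r * x \<in> J}" (is "t_ideal R ?D")
proof (rule t_idealI)
  have idJ: "ideal_of R J" using t_idealE(1)[OF J] .
  show "ideal_of R ?D" unfolding ideal_of_def
  proof (intro conjI ballI)
    show "?D \<subseteq> R" "0 \<in> ?D" using zero_closed ideal_ofD(2)[OF idJ] by auto
  next
    fix a b assume "a \<in> ?D" "b \<in> ?D"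
    then show "a + b \<in> ?D" using add_closed ideal_ofD(3)[OF idJ] by (simp add: distrib_right)
  next
    fix r a assume "r \<in> R" "a \<in> ?D"
    then show "r * a \<in> ?D" using mult_closed ideal_ofD(4)[OF idJ] by (simp add: mult.assoc)
  qed
  show "d \<in> ?D" "d \<noteq> 0" using d by auto
next
  fix F assume F: "finite F" "F \<subseteq> ?D" "\<exists>f\<in>F. f \<noteq> 0"
  show "vcl R F \<subseteq> ?D"
  proof
    fix y assume y: "y \<in> vcl R F"
    have "y \<in> R" using y F(2) vcl_subset by blast
    moreover have "vcl R ((*) x ` F) \<subseteq> J"
      using F x by (intro t_ideal_vcl_subset[OF J]) (auto simp: mult.commute)
    then have "x * y \<in> J" using vcl_image_mult[OF y] by blast
    ultimately show "y \<in> ?D" by (simp add: mult.commute)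
  qed
qed

lemma chain_Union_t_ideal:
  assumes C: "C \<noteq> {}" "subset.chain {N. t_ideal R N \<and> N \<noteq> R} C"
  shows "t_ideal R (\<Union>C)" "\<Union>C \<noteq> R"
proof -
  have t: "\<And>N. N \<in> C \<Longrightarrow> t_ideal R N" and proper: "\<And>N. N \<in> C \<Longrightarrow> N \<noteq> R"
    using C(2) unfolding subset_chain_def by auto
  have ideal: "ideal_of R (\<Union>C)" using chain_Union_ideal[OF C(1) _ C(2)] t t_idealE(1) by blast
  obtain N a where N: "N \<in> C" "a \<in> N" "a \<noteq> 0" using C(1) t t_idealE(3) by blast
  show "t_ideal R (\<Union>C)"
  proof (rule t_idealI[OF ideal])
    show "a \<in> \<Union>C" "a \<noteq> 0" using N by auto
  next
    fix F assume F: "finite F" "F \<subseteq> \<Union>C" "\<exists>f\<in>F. f \<noteq> 0"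
    obtain B where "B \<in> C" "F \<subseteq> B"
      using finite_subset_Union_chain[OF F(1,2) C] by blast
    then show "vcl R F \<subseteq> \<Union>C" using t_ideal_vcl_subset[OF t F(1) _ F(3)] by blast
  qed
  have "1 \<notin> N" if "N \<in> C" for N
    using ideal_eq_carrier_if_one t t_idealE(1) proper that by blast
  then show "\<Union>C \<noteq> R" using one_closed by blast
qed

lemma exists_tMax:
  assumes I: "t_ideal R I" "I \<noteq> R"
  shows "\<exists>M\<in>tMax R. I \<subseteq> M"
proof -
  define A where "A = {N. t_ideal R N \<and> N \<noteq> R \<and> I \<subseteq> N}"
  have "\<Union>C \<in> A" if C: "C \<noteq> {}" "subset.chain A C" for C
  proof -
    have "subset.chain {N. t_ideal R N \<and> N \<noteq> R} C"
      using C(2) by (auto simp: subset_chain_def A_def)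
    moreover have "I \<subseteq> \<Union>C" using C unfolding A_def subset_chain_def by blast
    ultimately show ?thesis using chain_Union_t_ideal[OF C(1)] unfolding A_def by blast
  qed
  moreover have "A \<noteq> {}" using I unfolding A_def by blast
  ultimately obtain M where M: "M \<in> A" "\<And>X. X \<in> A \<Longrightarrow> M \<subseteq> X \<Longrightarrow> X = M"
    using subset_Zorn_nonempty[of A] by metis
  have "M \<in> tMax R" unfolding tMax_def
  proof (intro CollectI conjI allI impI)
    show "t_ideal R M" "M \<noteq> R" using M(1) unfolding A_def by auto
    fix N assume "t_ideal R N \<and> N \<noteq> R \<and> M \<subseteq> N"
    then show "N = M" using M unfolding A_def by blast
  qed
  with M(1) show ?thesis unfolding A_def by blast
qed

lemma exists_tMax_tcl:
  assumes "ideal_of R J" "a \<in> J" "a \<noteq> 0" "tcl R J \<noteq> R"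
  shows "\<exists>M\<in>tMax R. J \<subseteq> M"
  using exists_tMax[OF t_ideal_tcl[OF assms(1-3)] assms(4)] subset_tcl[OF assms(1-3)] by blast

lemma tMax_prime:
  assumes M: "M \<in> tMax R"
  shows "prime_of R M"
proof -
  have tM: "t_ideal R M" and ideal: "ideal_of R M" and proper: "M \<noteq> R"
    using tMaxD[OF M] tMax_ideal[OF M] by auto
  have "a \<in> M \<or> b \<in> M" if ab: "a \<in> R" "b \<in> R" "a * b \<in> M" for a b
  proof (rule ccontr)
    assume not_in: "\<not> (a \<in> M \<or> b \<in> M)"
    define D where "D = {r \<in> R. r * b \<in> M}"
    obtain m where m: "m \<in> M" "m \<noteq> 0" using t_idealE(3)[OF tM] by blast
    have "b \<noteq> 0" using not_in ideal_ofD(2)[OF ideal] by auto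
    moreover have "m \<in> R" "m * b \<in> M" using m ideal_ofD(1)[OF ideal] ideal_mult_right[OF ideal ab(2)] by auto
    ultimately have "t_ideal R D" unfolding D_def using t_ideal_conductor[OF tM] m(2) by blast
    moreover have "M \<subseteq> D" "a \<in> D"
      unfolding D_def using ideal_ofD(1)[OF ideal] ideal_mult_right[OF ideal ab(2)] ab by auto
    ultimately have "D = R" using tMaxD(3)[OF M, of D] not_in by auto
    then have "1 \<in> D" using one_closed by simp
    then show False using not_in unfolding D_def by simp
  qed
  then show ?thesis unfolding prime_of_def using ideal proper by blast
qed

section \<open>Localizations and valuation overrings\<close>

lemma subset_localization: "prime_of R P \<Longrightarrow> R \<subseteq> localization R P"
  using localizationI[of _ R 1 P] one_closed prime_one_notin by fastforce

lemma localization_mult: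
  assumes P: "prime_of R P" and "x \<in> localization R P" "y \<in> localization R P"
  shows "x * y \<in> localization R P"
proof -
  obtain a s b t where "a \<in> R" "s \<in> R" "s \<notin> P" "x = a / s" "b \<in> R" "t \<in> R" "t \<notin> P" "y = b / t"
    using assms(2,3) by (metis localizationE)
  then show ?thesis
    using localizationI[of "a * b" R "s * t" P] mult_closed prime_mult_notin[OF P] by simp
qed

lemma localization_divide:
  assumes P: "prime_of R P" and "x \<in> localization R P" "t \<in> R" "t \<notin> P"
  shows "x / t \<in> localization R P"
proof -
  obtain a s where "a \<in> R" "s \<in> R" "s \<notin> P" "x = a / s"
    using assms(2) by (rule localizationE)
  then show ?thesis
    using localizationI[of a R "s * t" P] assms(3,4) mult_closed prime_mult_notin[OF P] by simp
qed

lemma localization_power: "prime_of R P \<Longrightarrow> x \<in> localization R P \<Longrightarrow> x ^ k \<in> localization R P"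
proof (induction k)
  case 0
  then show ?case using subset_localization one_closed by auto
next
  case (Suc k)
  then show ?case using localization_mult by simp
qed

lemma localization_quotient_notin:
  assumes Q: "prime_of R Q" "Q \<subseteq> M" and a: "a \<in> R" "a \<notin> Q" and b: "b \<in> Q" "b \<noteq> 0"
  shows "a / b \<notin> localization R M"
proof
  assume "a / b \<in> localization R M"
  then obtain c s where cs: "c \<in> R" "s \<in> R" "s \<notin> M" "a / b = c / s"
    by (rule localizationE)
  then have "s \<notin> Q" "s \<noteq> 0" using Q nonzero_if_notin_ideal[OF prime_ofD(1)[OF Q(1)]] by auto
  moreover have "a * s = c * b" using cs(4) \<open>s \<noteq> 0\<close> b(2) by (simp add: field_simps)
  moreover have "c * b \<in> Q" using ideal_ofD(4)[OF prime_ofD(1)[OF Q(1)] cs(1) b(1)] .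
  ultimately show False using prime_mult_notin[OF Q(1) a(1) cs(2) a(2)] by simp
qed

lemma primes_below_comparable:
  assumes M: "valuation_domain (localization R M)"
    and Q1: "prime_of R Q1" "Q1 \<subseteq> M" and Q2: "prime_of R Q2" "Q2 \<subseteq> M"
  shows "Q1 \<subseteq> Q2 \<or> Q2 \<subseteq> Q1"
proof (rule ccontr)
  assume "\<not> ?thesis"
  then obtain a b where ab: "a \<in> Q1" "a \<notin> Q2" "b \<in> Q2" "b \<notin> Q1" by blast
  have "a \<in> R" "b \<in> R" "a \<noteq> 0" "b \<noteq> 0"
    using ab prime_ofD(1)[OF Q1(1)] prime_ofD(1)[OF Q2(1)] ideal_ofD(1,2) by blast+
  then have "a / b \<notin> localization R M" "b / a \<notin> localization R M" "a / b \<noteq> 0"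
    using localization_quotient_notin[OF Q2] localization_quotient_notin[OF Q1] ab by auto
  then show False using valuation_domainD[OF M] by (metis inverse_divide)
qed

lemma quotient_mem_localization:
  assumes M: "prime_of R M" "valuation_domain (localization R M)"
    and Q: "prime_of R Q" "Q \<subseteq> M" and a: "a \<in> Q" and u: "u \<in> R" "u \<notin> Q"
  shows "a / u \<in> localization R M"
proof (cases "a = 0")
  case True
  then show ?thesis using subset_localization[OF M(1)] zero_closed by auto
next
  case False
  have "u / a \<notin> localization R M" using localization_quotient_notin[OF Q u a False] .
  moreover have "a / u \<noteq> 0" using False nonzero_if_notin_ideal[OF prime_ofD(1)[OF Q(1)] u(2)] by simp
  ultimately show ?thesis using valuation_domainD[OF M(2), of "a / u"] by (auto simp: inverse_divide)
qed

lemma mult_mem_localization_below: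
  assumes M: "prime_of R M" "valuation_domain (localization R M)"
    and Q: "prime_of R Q" "Q \<subseteq> M" and x: "x \<in> localization R Q" and a: "a \<in> Q"
  shows "x * a \<in> localization R M"
proof -
  obtain c u where cu: "c \<in> R" "u \<in> R" "u \<notin> Q" "x = c / u"
    using x by (rule localizationE)
  have "c \<in> localization R M" using subset_localization[OF M(1)] cu(1) by blast
  moreover have "a / u \<in> localization R M" using quotient_mem_localization[OF M Q a cu(2,3)] .
  ultimately have "c * (a / u) \<in> localization R M" by (rule localization_mult[OF M(1)])
  then show ?thesis using cu(4) by simp
qed

lemma Inter_chain_prime:
  assumes "C \<noteq> {}" "\<And>Q. Q \<in> C \<Longrightarrow> prime_of R Q" "\<And>Q1 Q2. Q1 \<in> C \<Longrightarrow> Q2 \<in> C \<Longrightarrow> Q1 \<subseteq> Q2 \<or> Q2 \<subseteq> Q1"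
  shows "prime_of R (\<Inter>C)"
  unfolding prime_of_def
proof (intro conjI ballI impI)
  show "ideal_of R (\<Inter>C)" using Inter_ideal assms(1,2) prime_ofD(1) by blast
  show "\<Inter>C \<noteq> R" using assms(1,2) prime_one_notin one_closed by blast
next
  fix a b assume ab: "a \<in> R" "b \<in> R" "a * b \<in> \<Inter>C"
  show "a \<in> \<Inter>C \<or> b \<in> \<Inter>C"
  proof (rule ccontr)
    assume "\<not> ?thesis"
    then obtain Q1 Q2 where Q: "Q1 \<in> C" "Q2 \<in> C" "a \<notin> Q1" "b \<notin> Q2" by blast
    then have "a \<notin> Q1 \<inter> Q2" "b \<notin> Q1 \<inter> Q2" "a * b \<in> Q1 \<inter> Q2" using ab(3) by auto
    moreover have "prime_of R (Q1 \<inter> Q2)"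
      using assms(3)[OF Q(1,2)] assms(2) Q(1,2) by (metis Int_absorb1 Int_absorb2)
    ultimately show False using prime_mult_notin ab(1,2) by blast
  qed
qed

lemma exists_Min_primes_below:
  assumes I: "ideal_of R I" and M: "prime_of R M" "valuation_domain (localization R M)" "I \<subseteq> M"
  shows "\<exists>P\<in>Min_primes R I. P \<subseteq> M"
proof -
  define C where "C = {Q. prime_of R Q \<and> I \<subseteq> Q \<and> Q \<subseteq> M}"
  have "M \<in> C" using M unfolding C_def by blast
  have "prime_of R (\<Inter>C)"
  proof (rule Inter_chain_prime)
    show "C \<noteq> {}" using \<open>M \<in> C\<close> by blast
    show "\<And>Q. Q \<in> C \<Longrightarrow> prime_of R Q" unfolding C_def by blast
    show "\<And>Q1 Q2. Q1 \<in> C \<Longrightarrow> Q2 \<in> C \<Longrightarrow> Q1 \<subseteq> Q2 \<or> Q2 \<subseteq> Q1"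
      unfolding C_def using primes_below_comparable[OF M(2)] by blast
  qed
  moreover have "I \<subseteq> \<Inter>C" "\<Inter>C \<subseteq> M" using \<open>M \<in> C\<close> unfolding C_def by auto
  moreover have "Q = \<Inter>C" if "prime_of R Q" "I \<subseteq> Q" "Q \<subseteq> \<Inter>C" for Q
  proof -
    have "Q \<in> C" using that \<open>\<Inter>C \<subseteq> M\<close> unfolding C_def by blast
    then show ?thesis using that(3) by blast
  qed
  ultimately have "\<Inter>C \<in> Min_primes R I" unfolding Min_primes_def by (intro CollectI conjI allI impI) auto
  then show ?thesis using \<open>\<Inter>C \<subseteq> M\<close> by blast
qed

lemma localization_exists_divisor:
  assumes P: "prime_of R P" "valuation_domain (localization R P)"
    and F: "finite F" "\<exists>f\<in>F. f \<noteq> 0"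
  shows "\<exists>f0\<in>F. f0 \<noteq> 0 \<and> (\<forall>f\<in>F. f / f0 \<in> localization R P)"
  using F
proof (induction F rule: finite_induct)
  case (insert g F)
  have one: "1 \<in> localization R P" and zero: "0 \<in> localization R P"
    using subset_localization[OF P(1)] one_closed zero_closed by auto
  show ?case
  proof (cases "\<exists>f\<in>F. f \<noteq> 0")
    case False
    then have "g \<noteq> 0" using insert.prems by blast
    then show ?thesis using False one zero by auto
  next
    case True
    then obtain f0 where f0: "f0 \<in> F" "f0 \<noteq> 0" "\<forall>f\<in>F. f / f0 \<in> localization R P"
      using insert.IH by blast
    show ?thesis
    proof (cases "g / f0 \<in> localization R P")
      case True
      then show ?thesis using f0 by blast
    next
      case False
      then have g: "g \<noteq> 0" using zero by auto
      then have "f0 / g \<in> localization R P"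
        using valuation_domainD[OF P(2), of "g / f0"] False f0(2) by (simp add: inverse_divide)
      then have "f / g \<in> localization R P" if "f \<in> F" for f
        using localization_mult[OF P(1) f0(3)[rule_format, OF that]] f0(2) by fastforce
      then show ?thesis using g one by auto
    qed
  qed
qed simp

lemma common_denominator:
  assumes P: "prime_of R P" and F: "finite F" "\<And>f. f \<in> F \<Longrightarrow> h f \<in> localization R P"
  shows "\<exists>s\<in>R. s \<notin> P \<and> (\<forall>f\<in>F. s * h f \<in> R)"
  using F
proof (induction F rule: finite_induct)
  case empty
  then show ?case using one_closed prime_one_notin[OF P] by blast
next
  case (insert g F)
  then obtain s where s: "s \<in> R" "s \<notin> P" "\<forall>f\<in>F. s * h f \<in> R" by auto
  obtain a t where at: "a \<in> R" "t \<in> R" "t \<notin> P" "h g = a / t"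
    using insert.prems by (meson insertI1 localizationE)
  have "t \<noteq> 0" using nonzero_if_notin_ideal[OF prime_ofD(1)[OF P] at(3)] .
  then have "(s * t) * h g = s * a" using at(4) by simp
  moreover have "(s * t) * h f \<in> R" if "f \<in> F" for f
  proof -
    have "t * (s * h f) \<in> R" using mult_closed[OF at(2) s(3)[rule_format, OF that]] .
    then show ?thesis by (simp add: algebra_simps)
  qed
  ultimately have "\<forall>f\<in>insert g F. (s * t) * h f \<in> R" using s at mult_closed by auto
  moreover have "s * t \<in> R" "s * t \<notin> P" using s at mult_closed prime_mult_notin[OF P] by auto
  ultimately show ?case by blast
qed

lemma valuation_common_denominator:
  assumes P: "prime_of R P" "valuation_domain (localization R P)"
    and F: "finite F" "\<exists>f\<in>F. f \<noteq> 0"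
  obtains f0 s where "f0 \<in> F" "f0 \<noteq> 0" "s \<in> R" "s \<notin> P" "\<And>f. f \<in> F \<Longrightarrow> (s / f0) * f \<in> R"
proof -
  obtain f0 where f0: "f0 \<in> F" "f0 \<noteq> 0" "\<forall>f\<in>F. f / f0 \<in> localization R P"
    using localization_exists_divisor[OF P F] by blast
  moreover obtain s where "s \<in> R" "s \<notin> P" "\<forall>f\<in>F. s * (f / f0) \<in> R"
    using common_denominator[OF P(1) F(1), of "\<lambda>f. f / f0"] f0(3) by blast
  ultimately show ?thesis using that by (metis times_divide_eq_left times_divide_eq_right)
qed

lemma colon_quotient_if_mult_notin:
  assumes M: "prime_of R M" "valuation_domain (localization R M)"
    and P: "prime_of R P" "P \<subseteq> M" and x: "x \<in> colon R P" and p: "p \<in> P" and xp: "x * p \<notin> P"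
  obtains b s where "b \<in> P" "b \<noteq> 0" "s \<in> R" "s \<notin> M" "x = s / b"
proof -
  define w where "w = x * p"
  have ideal: "ideal_of R P" using prime_ofD(1)[OF P(1)] .
  have w: "w \<in> R" "w \<notin> P" "w \<noteq> 0" "p \<noteq> 0"
    using x p xp ideal_ofD(2)[OF ideal] unfolding w_def colon_iff by auto
  have "w / p \<notin> localization R M" using localization_quotient_notin[OF P w(1,2) p w(4)] .
  then have "p / w \<in> localization R M"
    using valuation_domainD[OF M(2), of "w / p"] w(3,4) by (simp add: inverse_divide)
  then obtain b s where bs: "b \<in> R" "s \<in> R" "s \<notin> M" "p / w = b / s" by (rule localizationE)
  have "s \<noteq> 0" using bs(3) ideal_ofD(2)[OF prime_ofD(1)[OF M(1)]] by auto
  have ps: "p * s = b * w" using bs(4) \<open>s \<noteq> 0\<close> w(3) by (simp add: field_simps)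
  then have "b * w \<in> P" using ideal_ofD(4)[OF ideal bs(2) p] by (simp add: mult.commute)
  then have "b \<in> P" "b \<noteq> 0" using prime_ofD(3)[OF P(1) bs(1) w(1)] w(2) ps \<open>s \<noteq> 0\<close> w(4) by auto
  moreover have "x = s / b" using ps \<open>b \<noteq> 0\<close> w(4) unfolding w_def by (simp add: field_simps)
  ultimately show ?thesis using that bs(2,3) by blast
qed

text \<open>If \<open>x p \<notin> P\<close>, write \<open>x = s / b\<close> as above and pick \<open>t \<in> M - P\<close>: then \<open>t x \<notin> R\<^sub>M\<close>,
  and \<open>(t x)\<inverse> = d / u\<close> with \<open>u \<notin> M\<close> forces \<open>d \<in> P\<close>, whence \<open>u = t (x d) \<in> M\<close>.\<close>
lemma colon_mult_mem_prime:
  assumes M: "prime_of R M" "valuation_domain (localization R M)"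
    and P: "prime_of R P" "P \<subseteq> M" and x: "x \<in> colon R P" and p: "p \<in> P" and xp: "x * p \<in> M"
  shows "x * p \<in> P"
proof (rule ccontr)
  assume "x * p \<notin> P"
  then obtain b s where b: "b \<in> P" "b \<noteq> 0" and s: "s \<in> R" "s \<notin> M" and x_eq: "x = s / b"
    using colon_quotient_if_mult_notin[OF M P x p] by blast
  have idealP: "ideal_of R P" and idealM: "ideal_of R M" using P(1) M(1) prime_ofD(1) by auto
  have "s \<notin> P" "s \<noteq> 0" using s(2) P(2) ideal_ofD(2)[OF idealM] by auto
  obtain t where t: "t \<in> M" "t \<notin> P" using xp \<open>x * p \<notin> P\<close> by blast
  have "t \<in> R" "t \<noteq> 0" using t ideal_ofD(1)[OF idealM] ideal_ofD(2)[OF idealP] by auto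
  have "t * s \<in> R" "t * s \<notin> P"
    using mult_closed prime_mult_notin[OF P(1)] \<open>t \<in> R\<close> s(1) t(2) \<open>s \<notin> P\<close> by auto
  then have "t * x \<notin> localization R M"
    using localization_quotient_notin[OF P _ _ b] x_eq by auto
  moreover have "t * x \<noteq> 0" using \<open>t \<noteq> 0\<close> \<open>s \<noteq> 0\<close> b(2) x_eq by simp
  ultimately have "inverse (t * x) \<in> localization R M"
    using valuation_domainD[OF M(2)] by blast
  then obtain d u where du: "d \<in> R" "u \<in> R" "u \<notin> M" "inverse (t * x) = d / u"
    by (rule localizationE)
  have "u \<noteq> 0" using du(3) ideal_ofD(2)[OF idealM] by blast
  then have u_eq: "u = d * (t * x)" using du(4) \<open>t * x \<noteq> 0\<close> by (simp add: field_simps)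
  then have "(d * t) * s = u * b" using x_eq b(2) by (simp add: field_simps)
  also have "\<dots> \<in> P" using ideal_mult_right[OF idealP du(2) b(1)] by (simp add: mult.commute)
  finally have "d * t \<in> P"
    using prime_ofD(3)[OF P(1) mult_closed[OF du(1) \<open>t \<in> R\<close>] s(1)] \<open>s \<notin> P\<close> by blast
  then have "d \<in> P" using prime_ofD(3)[OF P(1) du(1) \<open>t \<in> R\<close>] t(2) by blast
  then have "x * d \<in> R" using x unfolding colon_iff by blast
  then have "(x * d) * t \<in> M" using ideal_ofD(4)[OF idealM _ t(1)] by blast
  then show False using u_eq du(3) by (simp add: algebra_simps)
qed

section \<open>Minimal primes\<close>

lemma exists_maximal_disjoint_ideal:
  assumes "ideal_of R I" "I \<inter> S = {}"
  obtains Q where "ideal_of R Q" "I \<subseteq> Q" "Q \<inter> S = {}"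
    "\<And>J. ideal_of R J \<Longrightarrow> Q \<subseteq> J \<Longrightarrow> J \<inter> S = {} \<Longrightarrow> J = Q"
proof -
  define A where "A = {Q. ideal_of R Q \<and> I \<subseteq> Q \<and> Q \<inter> S = {}}"
  have "\<Union>C \<in> A" if C: "C \<noteq> {}" "subset.chain A C" for C
  proof -
    have "\<And>N. N \<in> C \<Longrightarrow> ideal_of R N" using C(2) unfolding A_def subset_chain_def by blast
    then have "ideal_of R (\<Union>C)" using chain_Union_ideal[OF C(1) _ C(2)] by blast
    moreover have "I \<subseteq> \<Union>C" "\<Union>C \<inter> S = {}" using C unfolding A_def subset_chain_def by blast+
    ultimately show ?thesis unfolding A_def by blast
  qed
  moreover have "A \<noteq> {}" using assms unfolding A_def by blast
  ultimately obtain Q where Q: "Q \<in> A" "\<forall>X\<in>A. Q \<subseteq> X \<longrightarrow> X = Q"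
    using subset_Zorn_nonempty[of A] by blast
  show ?thesis
  proof (rule that)
    show "ideal_of R Q" "I \<subseteq> Q" "Q \<inter> S = {}" using Q(1) unfolding A_def by auto
    fix J assume "ideal_of R J" "Q \<subseteq> J" "J \<inter> S = {}"
    then show "J = Q" using Q \<open>I \<subseteq> Q\<close> unfolding A_def by blast
  qed
qed

lemma prime_if_maximal_disjoint:
  assumes Q: "ideal_of R Q" "Q \<inter> S = {}" "\<And>J. ideal_of R J \<Longrightarrow> Q \<subseteq> J \<Longrightarrow> J \<inter> S = {} \<Longrightarrow> J = Q"
    and S: "1 \<in> S" "\<And>x y. x \<in> S \<Longrightarrow> y \<in> S \<Longrightarrow> x * y \<in> S"
  shows "prime_of R Q"
proof -
  have meet: "\<exists>q r. q \<in> Q \<and> r \<in> R \<and> q + r * a \<in> S" if a: "a \<in> R" "a \<notin> Q" for a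
  proof (rule ccontr)
    assume "\<not> ?thesis"
    then have disjoint: "{q + r * a | q r. q \<in> Q \<and> r \<in> R} \<inter> S = {}" by blast
    have "Q \<subseteq> {q + r * a | q r. q \<in> Q \<and> r \<in> R}"
    proof
      fix q assume "q \<in> Q"
      moreover have "q = q + 0 * a" by simp
      ultimately show "q \<in> {q + r * a | q r. q \<in> Q \<and> r \<in> R}" using zero_closed by blast
    qed
    then have "{q + r * a | q r. q \<in> Q \<and> r \<in> R} = Q"
      using Q(3)[OF ideal_adjoin[OF Q(1) a(1)] _ disjoint] by blast
    moreover have "a = 0 + 1 * a" by simp
    then have "a \<in> {q + r * a | q r. q \<in> Q \<and> r \<in> R}" using ideal_ofD(2)[OF Q(1)] one_closed by blast
    ultimately show False using a(2) by blast
  qed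
  have "a \<in> Q \<or> b \<in> Q" if ab: "a \<in> R" "b \<in> R" "a * b \<in> Q" for a b
  proof (rule ccontr)
    assume "\<not> ?thesis"
    then obtain q1 r1 q2 r2 where m: "q1 \<in> Q" "r1 \<in> R" "q1 + r1 * a \<in> S" "q2 \<in> Q" "r2 \<in> R" "q2 + r2 * b \<in> S"
      using meet ab by metis
    have "(q1 + r1 * a) * (q2 + r2 * b) = q1 * (q2 + r2 * b) + (r1 * q2) * a + (r1 * r2) * (a * b)"
      by (simp add: algebra_simps)
    moreover have "q2 + r2 * b \<in> R" using m ab add_closed mult_closed ideal_ofD(1)[OF Q(1)] by blast
    moreover have "r1 * q2 \<in> Q" using ideal_ofD(4)[OF Q(1) m(2) m(4)] .
    ultimately have "(q1 + r1 * a) * (q2 + r2 * b) \<in> Q"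
      using ideal_mult_right[OF Q(1)] ideal_ofD(3,4)[OF Q(1)] m ab mult_closed by metis
    moreover have "(q1 + r1 * a) * (q2 + r2 * b) \<in> S" using S(2) m by blast
    ultimately show False using Q(2) by blast
  qed
  moreover have "Q \<noteq> R" using Q(2) S(1) one_closed by blast
  ultimately show ?thesis unfolding prime_of_def using Q(1) by blast
qed

lemma Min_primes_mult_power_mem:
  assumes I: "ideal_of R I" and P: "P \<in> Min_primes R I" and p: "p \<in> P"
  shows "\<exists>s\<in>R. s \<notin> P \<and> (\<exists>k. s * p ^ k \<in> I)"
proof (rule ccontr)
  assume no_witness: "\<not> ?thesis"
  have prime: "prime_of R P" using Min_primesD(1)[OF P] .
  define S where "S = {s * p ^ k | s k. s \<in> R \<and> s \<notin> P}"
  have "I \<inter> S = {}" using no_witness unfolding S_def by blast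
  then obtain Q where Q: "ideal_of R Q" "I \<subseteq> Q" "Q \<inter> S = {}"
    "\<And>J. ideal_of R J \<Longrightarrow> Q \<subseteq> J \<Longrightarrow> J \<inter> S = {} \<Longrightarrow> J = Q"
    using exists_maximal_disjoint_ideal[OF I] by metis
  have "s * p ^ 0 \<in> S" if "s \<in> R" "s \<notin> P" for s using that unfolding S_def by blast
  then have "Q \<subseteq> P" using Q(3) ideal_ofD(1)[OF Q(1)] by fastforce
  have one: "1 \<in> S" using \<open>\<And>s. s \<in> R \<Longrightarrow> s \<notin> P \<Longrightarrow> s * p ^ 0 \<in> S\<close>[of 1] one_closed prime_one_notin[OF prime] by simp
  have "x * y \<in> S" if xy: "x \<in> S" "y \<in> S" for x y
  proof -
    obtain s1 k1 s2 k2 where "x = s1 * p ^ k1" "s1 \<in> R" "s1 \<notin> P" "y = s2 * p ^ k2" "s2 \<in> R" "s2 \<notin> P"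
      using xy unfolding S_def by blast
    moreover have "x * y = (s1 * s2) * p ^ (k1 + k2)" using calculation by (simp add: power_add algebra_simps)
    ultimately show ?thesis using mult_closed prime_mult_notin[OF prime] unfolding S_def by blast
  qed
  then have "prime_of R Q" using prime_if_maximal_disjoint[OF Q(1,3,4) one] by blast
  then have "Q = P" using Min_primesD(3)[OF P] Q(2) \<open>Q \<subseteq> P\<close> by blast
  moreover have "p = 1 * p ^ 1" by simp
  then have "p \<in> S" unfolding S_def using one_closed prime_one_notin[OF prime] by blast
  ultimately show False using p Q(3) by blast
qed

lemma common_mult_power_mem:
  assumes P: "prime_of R P" and I: "ideal_of R I" and F: "finite F" "F \<subseteq> R"
    and witness: "\<And>f. f \<in> F \<Longrightarrow> \<exists>s\<in>R. s \<notin> P \<and> (\<exists>k. s * f ^ k \<in> I)"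
  shows "\<exists>s\<in>R. s \<notin> P \<and> (\<exists>k. \<forall>f\<in>F. s * f ^ k \<in> I)"
  using F witness
proof (induction F rule: finite_induct)
  case empty
  then show ?case using one_closed prime_one_notin[OF P] by blast
next
  case (insert g F)
  then obtain s1 k1 where 1: "s1 \<in> R" "s1 \<notin> P" "\<forall>f\<in>F. s1 * f ^ k1 \<in> I" by auto
  obtain s2 k2 where 2: "s2 \<in> R" "s2 \<notin> P" "s2 * g ^ k2 \<in> I" using insert.prems(2) by blast
  have "(s1 * s2) * f ^ (k1 + k2) \<in> I" if f: "f \<in> insert g F" for f
  proof (cases "f = g")
    case True
    have "s1 * g ^ k1 \<in> R" using 1 insert.prems(1) mult_closed power_closed by blast
    then have "(s1 * g ^ k1) * (s2 * g ^ k2) \<in> I" using ideal_ofD(4)[OF I] 2(3) by blast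
    then show ?thesis using True by (simp add: power_add algebra_simps)
  next
    case False
    then have "f \<in> F" using f by blast
    have "s2 * f ^ k2 \<in> R" using 2 f insert.prems(1) mult_closed power_closed by blast
    then have "(s2 * f ^ k2) * (s1 * f ^ k1) \<in> I" using ideal_ofD(4)[OF I] 1(3) \<open>f \<in> F\<close> by blast
    then show ?thesis by (simp add: power_add algebra_simps)
  qed
  moreover have "s1 * s2 \<in> R" "s1 * s2 \<notin> P" using 1 2 mult_closed prime_mult_notin[OF P] by auto
  ultimately show ?case by blast
qed

section \<open>The ring E(I)\<close>

lemma subring_Eend:
  assumes I: "ideal_of R I"
  shows "subring_of (Eend I)"
  unfolding subring_of_def
proof (intro conjI ballI)
  show "0 \<in> Eend I" "1 \<in> Eend I" using ideal_ofD(2)[OF I] by (auto simp: Eend_iff)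
next
  fix a b assume "a \<in> Eend I" "b \<in> Eend I"
  then have a: "\<And>i. i \<in> I \<Longrightarrow> a * i \<in> I" and b: "\<And>i. i \<in> I \<Longrightarrow> b * i \<in> I"
    by (auto simp: Eend_iff)
  show "a + b \<in> Eend I" using a b ideal_ofD(3)[OF I] by (simp add: Eend_iff distrib_right)
  show "a * b \<in> Eend I" using a b by (simp add: Eend_iff mult.assoc)
  show "- a \<in> Eend I" using a ideal_uminus[OF I] by (simp add: Eend_iff)
qed

lemma subset_Eend: "ideal_of R I \<Longrightarrow> R \<subseteq> Eend I"
  using ideal_ofD(4) by (auto simp: Eend_iff)

lemma ideal_of_Eend: "ideal_of R I \<Longrightarrow> ideal_of (Eend I) I"
  unfolding ideal_of_def using subset_Eend by (auto simp: Eend_iff)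

lemma Eend_eq_colon_if_strong:
  assumes "strong_ideal R I" "I \<subseteq> R"
  shows "Eend I = colon R I"
proof
  show "Eend I \<subseteq> colon R I" using Eend_subset_colon[OF assms(2)] .
next
  obtain A where A: "I = prod_sub R A (colon R A)"
    using assms(1) unfolding strong_ideal_def by blast
  define G where "G = {a * b | a b. a \<in> A \<and> b \<in> colon R A}"
  have I_eq: "I = rspan R G" using A unfolding prod_sub_def G_def by simp
  show "colon R I \<subseteq> Eend I"
  proof
    fix x assume x: "x \<in> colon R I"
    have xb: "x * b \<in> colon R A" if b: "b \<in> colon R A" for b
      unfolding colon_iff
    proof
      fix a assume "a \<in> A"
      then have "a * b \<in> G" using b unfolding G_def by blast
      then have "x * (a * b) \<in> R" using x rspan_superset unfolding colon_iff I_eq by blast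
      then show "x * b * a \<in> R" by (simp add: algebra_simps)
    qed
    have "x * g \<in> G" if "g \<in> G" for g
    proof -
      obtain a b where "g = a * b" "a \<in> A" "b \<in> colon R A" using \<open>g \<in> G\<close> unfolding G_def by blast
      moreover have "x * (a * b) = a * (x * b)" by (simp add: algebra_simps)
      ultimately show ?thesis using xb[of b] unfolding G_def by blast
    qed
    then show "x \<in> Eend I" unfolding Eend_iff I_eq using rspan_image_mult by blast
  qed
qed

lemma colon_mem_localization:
  assumes "I \<subseteq> R" "x \<in> colon R I" "ideal_of R M" "\<not> I \<subseteq> M"
  shows "x \<in> localization R M"
proof -
  obtain a where a: "a \<in> I" "a \<notin> M" using assms(4) by blast
  then have "a \<noteq> 0" using ideal_ofD(2)[OF assms(3)] by blast
  have "x * a \<in> R" using assms(2) a(1) unfolding colon_iff by blast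
  then have "(x * a) / a \<in> localization R M" using localizationI assms(1) a by blast
  then show ?thesis using \<open>a \<noteq> 0\<close> by simp
qed

lemma Eend_mem_localization_Min_primes:
  assumes I: "ideal_of R I" and P: "P \<in> Min_primes R I"
    and V: "valuation_domain (localization R P)" and x: "x \<in> Eend I"
  shows "x \<in> localization R P"
proof (rule ccontr)
  assume x_notin: "x \<notin> localization R P"
  have prime: "prime_of R P" and "I \<subseteq> P" using Min_primesD[OF P] by auto
  have "x \<noteq> 0" using x_notin subset_localization[OF prime] zero_closed by auto
  then have "inverse x \<in> localization R P" using valuation_domainD[OF V] x_notin by blast
  then obtain a u where au: "a \<in> R" "u \<in> R" "u \<notin> P" "inverse x = a / u"
    by (rule localizationE)
  have "a \<noteq> 0" using au \<open>x \<noteq> 0\<close> by auto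
  have x_eq: "x = u / a" using au(4) by (metis inverse_divide inverse_inverse_eq)
  have "a \<in> P" using localizationI[OF au(2) au(1)] x_eq x_notin by blast
  then obtain s k where s: "s \<in> R" "s \<notin> P" "s * a ^ k \<in> I"
    using Min_primes_mult_power_mem[OF I P] by blast
  have "x ^ k * (s * a ^ k) \<in> I" using Eend_power[OF x s(3)] .
  moreover have "x ^ k * (s * a ^ k) = s * u ^ k" using x_eq \<open>a \<noteq> 0\<close> by (simp add: power_divide)
  ultimately have "s * u ^ k \<in> P" using \<open>I \<subseteq> P\<close> by auto
  moreover have "u ^ k \<notin> P" using prime_power_mem[OF prime au(2)] au(3) by blast
  ultimately show False using prime_mult_notin[OF prime s(1) power_closed[OF au(2)] s(2)] by blast
qed

definition tMax_hull :: "'k set \<Rightarrow> 'k set" where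
  "tMax_hull F = {y \<in> R. \<forall>M\<in>tMax R. F \<subseteq> M \<longrightarrow> y \<in> M}"

lemma tMax_hull_mono: "F \<subseteq> F' \<Longrightarrow> tMax_hull F \<subseteq> tMax_hull F'"
  unfolding tMax_hull_def by blast

lemma subset_tMax_hull: "F \<subseteq> R \<Longrightarrow> F \<subseteq> tMax_hull F"
  unfolding tMax_hull_def by blast

lemma tMax_hull_iff: "y \<in> tMax_hull F \<longleftrightarrow> y \<in> R \<and> (\<forall>M\<in>tMax R. F \<subseteq> M \<longrightarrow> y \<in> M)"
  unfolding tMax_hull_def by simp

lemma ideal_tMax_hull: "ideal_of R (tMax_hull F)"
  unfolding ideal_of_def
proof (intro conjI ballI)
  show "tMax_hull F \<subseteq> R" by (simp add: tMax_hull_iff subset_iff)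
  have "0 \<in> M" if "M \<in> tMax R" for M using ideal_ofD(2)[OF tMax_ideal[OF that]] .
  then show "0 \<in> tMax_hull F" using zero_closed by (simp add: tMax_hull_iff)
next
  fix a b assume ab: "a \<in> tMax_hull F" "b \<in> tMax_hull F"
  have "a + b \<in> M" if "M \<in> tMax R" "F \<subseteq> M" for M
    using ideal_ofD(3)[OF tMax_ideal[OF that(1)]] ab that by (simp add: tMax_hull_iff)
  then show "a + b \<in> tMax_hull F" using ab add_closed by (simp add: tMax_hull_iff)
next
  fix r a assume ra: "r \<in> R" "a \<in> tMax_hull F"
  have "r * a \<in> M" if "M \<in> tMax R" "F \<subseteq> M" for M
    using ideal_ofD(4)[OF tMax_ideal[OF that(1)]] ra that by (simp add: tMax_hull_iff)
  then show "r * a \<in> tMax_hull F" using ra mult_closed by (simp add: tMax_hull_iff)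
qed

lemma radical_tMax_hull: "radical_of R (tMax_hull F)"
  unfolding radical_of_def
  using ideal_tMax_hull prime_power_mem[OF tMax_prime] by (auto simp: tMax_hull_def)

lemma t_ideal_tMax_hull:
  assumes "F \<subseteq> R" "f \<in> F" "f \<noteq> 0"
  shows "t_ideal R (tMax_hull F)"
proof (rule t_idealI[OF ideal_tMax_hull])
  show "f \<in> tMax_hull F" "f \<noteq> 0" using assms subset_tMax_hull by auto
next
  fix G assume G: "finite G" "G \<subseteq> tMax_hull F" "\<exists>g\<in>G. g \<noteq> 0"
  then have "vcl R G \<subseteq> R" using vcl_subset unfolding tMax_hull_def by blast
  moreover have "vcl R G \<subseteq> M" if "M \<in> tMax R" "F \<subseteq> M" for M
    using t_ideal_vcl_subset[OF tMaxD(1)[OF that(1)] G(1) _ G(3)] G(2) that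
    unfolding tMax_hull_def by blast
  ultimately show "vcl R G \<subseteq> tMax_hull F" unfolding tMax_hull_def by blast
qed

text \<open>If no finite \<open>F0\<close> works, adding elements of \<open>P\<close> outside the hull one at a time gives a
  strictly ascending chain of radical t-ideals.\<close>
lemma acc_radical_t_finite_hull:
  assumes acc: "acc_radical_t R" and P: "t_ideal R P"
  obtains F0 where "finite F0" "F0 \<subseteq> P" "\<exists>f\<in>F0. f \<noteq> 0" "P \<subseteq> tMax_hull F0"
proof -
  have P_sub: "P \<subseteq> R" using ideal_ofD(1)[OF t_idealE(1)[OF P]] .
  obtain p0 where p0: "p0 \<in> P" "p0 \<noteq> 0" using t_idealE(3)[OF P] by blast
  have "\<exists>F0. finite F0 \<and> F0 \<subseteq> P \<and> (\<exists>f\<in>F0. f \<noteq> 0) \<and> P \<subseteq> tMax_hull F0"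
  proof (rule ccontr)
    assume no_F0: "\<not> ?thesis"
    define g where "g F = (SOME p. p \<in> P \<and> p \<notin> tMax_hull F)" for F
    have g: "g F \<in> P" "g F \<notin> tMax_hull F" if "finite F" "F \<subseteq> P" "p0 \<in> F" for F
    proof -
      have "\<exists>p. p \<in> P \<and> p \<notin> tMax_hull F" using no_F0 that p0(2) by blast
      from someI_ex[OF this] show "g F \<in> P" "g F \<notin> tMax_hull F" unfolding g_def by blast+
    qed
    define Fs where "Fs = rec_nat {p0} (\<lambda>_ F. insert (g F) F)"
    have Fs_Suc: "Fs (Suc n) = insert (g (Fs n)) (Fs n)" for n unfolding Fs_def by simp
    have Fs: "finite (Fs n) \<and> Fs n \<subseteq> P \<and> p0 \<in> Fs n" for n
    proof (induction n)
      case 0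
      then show ?case using p0 by (simp add: Fs_def)
    next
      case (Suc n)
      then show ?case using g(1)[of "Fs n"] by (simp add: Fs_Suc)
    qed
    have Fs_sub: "Fs n \<subseteq> R" "p0 \<in> Fs n" for n using Fs[of n] P_sub by auto
    define C where "C n = tMax_hull (Fs n)" for n
    have "\<forall>n. radical_of R (C n) \<and> t_ideal R (C n)"
      unfolding C_def using radical_tMax_hull t_ideal_tMax_hull[OF Fs_sub p0(2)] by blast
    moreover have "\<forall>n. C n \<subseteq> C (Suc n)"
      unfolding C_def Fs_Suc by (intro allI tMax_hull_mono subset_insertI)
    ultimately obtain N where N: "\<forall>n\<ge>N. C n = C N"
      using acc[unfolded acc_radical_t_def, rule_format, of C] by blast
    have "C (Suc N) = C N" using N[rule_format, of "Suc N"] by simp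
    moreover have "g (Fs N) \<in> C (Suc N)"
      unfolding C_def using subset_tMax_hull[OF Fs_sub(1)] Fs_Suc by blast
    ultimately show False using g(2) Fs[of N] unfolding C_def by blast
  qed
  then show ?thesis using that by blast
qed

end

locale pvmd =
  fixes R :: "'k::field set"
  assumes PvMD: "PvMD R"

sublocale pvmd \<subseteq> field_subring
  using PvMD unfolding PvMD_def domain_with_qf_def by unfold_locales blast

context pvmd
begin

lemma exists_fraction: "\<exists>a\<in>R. \<exists>b\<in>R. b \<noteq> 0 \<and> x = a / b"
  using PvMD unfolding PvMD_def domain_with_qf_def by blast

lemma valuation_tMax: "M \<in> tMax R \<Longrightarrow> valuation_domain (localization R M)"
  using PvMD unfolding PvMD_def by blast

lemma mem_if_mem_tMax_localizations:
  assumes local: "\<And>M. M \<in> tMax R \<Longrightarrow> x \<in> localization R M"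
  shows "x \<in> R"
proof (cases "x = 0")
  case False
  define D where "D = {r \<in> R. r * x \<in> R}"
  obtain a b where ab: "a \<in> R" "b \<in> R" "b \<noteq> 0" "x = a / b" using exists_fraction by blast
  then have "b * x \<in> R" by simp
  then have D: "t_ideal R D" unfolding D_def using t_ideal_conductor[OF t_ideal_carrier False ab(2,3)] by blast
  have "D = R"
  proof (rule ccontr)
    assume "D \<noteq> R"
    then obtain M where M: "M \<in> tMax R" "D \<subseteq> M" using exists_tMax[OF D] by blast
    obtain c s where cs: "c \<in> R" "s \<in> R" "s \<notin> M" "x = c / s"
      using local[OF M(1)] by (rule localizationE)
    have "s \<noteq> 0" using cs(3) ideal_ofD(2)[OF tMax_ideal[OF M(1)]] by blast
    then have "s \<in> D" using cs unfolding D_def by simp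
    then show False using M(2) cs(3) by blast
  qed
  then have "1 \<in> D" using one_closed by simp
  then show ?thesis unfolding D_def by simp
qed (simp add: zero_closed)

lemma vcl_power:
  assumes F: "finite F" "\<exists>f\<in>F. f \<noteq> 0" and y: "y \<in> vcl R F"
  shows "y ^ k \<in> vcl R ((\<lambda>f. f ^ k) ` F)"
proof (rule vclI)
  fix z assume z: "\<And>g. g \<in> (\<lambda>f. f ^ k) ` F \<Longrightarrow> z * g \<in> R"
  show "y ^ k * z \<in> R"
  proof (rule mem_if_mem_tMax_localizations)
    fix M assume M: "M \<in> tMax R"
    have prime: "prime_of R M" using tMax_prime[OF M] .
    obtain f0 s where f0: "f0 \<in> F" "f0 \<noteq> 0" and s: "s \<in> R" "s \<notin> M" "\<And>f. f \<in> F \<Longrightarrow> (s / f0) * f \<in> R"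
      using valuation_common_denominator[OF prime valuation_tMax[OF M] F] by blast
    have "y * (s / f0) \<in> R" using vclD[OF y s(3)] .
    then have "(y * (s / f0)) / s \<in> localization R M"
      using localization_divide[OF prime] subset_localization[OF prime] s(1,2) by blast
    moreover have "(y * (s / f0)) / s = y / f0"
      using nonzero_if_notin_ideal[OF prime_ofD(1)[OF prime] s(2)] by simp
    ultimately have "(y / f0) ^ k \<in> localization R M" using localization_power[OF prime] by simp
    moreover have "z * f0 ^ k \<in> localization R M" using z f0(1) subset_localization[OF prime] by blast
    ultimately have "(z * f0 ^ k) * (y / f0) ^ k \<in> localization R M" using localization_mult[OF prime] by blast
    then show "y ^ k * z \<in> localization R M" using f0(2) by (simp add: power_divide mult.commute)
  qed
qed

lemma t_ideal_Min_primes: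
  assumes I: "t_ideal R I" and P: "P \<in> Min_primes R I"
  shows "t_ideal R P"
proof -
  have prime: "prime_of R P" and "I \<subseteq> P" using Min_primesD[OF P] by auto
  have ideal: "ideal_of R P" using prime_ofD(1)[OF prime] .
  obtain a where a: "a \<in> I" "a \<noteq> 0" using t_idealE(3)[OF I] by blast
  show ?thesis
  proof (rule t_idealI[OF ideal])
    show "a \<in> P" "a \<noteq> 0" using a \<open>I \<subseteq> P\<close> by auto
  next
    fix F assume F: "finite F" "F \<subseteq> P" "\<exists>f\<in>F. f \<noteq> 0"
    have F_sub: "F \<subseteq> R" using F(2) ideal_ofD(1)[OF ideal] by blast
    show "vcl R F \<subseteq> P"
    proof
      fix y assume y: "y \<in> vcl R F"
      then have "y \<in> R" using vcl_subset[OF F_sub] by blast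
      obtain s k where s: "s \<in> R" "s \<notin> P" "\<forall>f\<in>F. s * f ^ k \<in> I"
        using common_mult_power_mem[OF prime t_idealE(1)[OF I] F(1) F_sub]
          Min_primes_mult_power_mem[OF t_idealE(1)[OF I] P] F(2) by blast
      have "s \<noteq> 0" using nonzero_if_notin_ideal[OF ideal s(2)] .
      have "s * y ^ k \<in> vcl R ((*) s ` (\<lambda>f. f ^ k) ` F)"
        using vcl_image_mult[OF vcl_power[OF F(1,3) y]] .
      moreover have "vcl R ((*) s ` (\<lambda>f. f ^ k) ` F) \<subseteq> I"
        using F(1,3) s(3) \<open>s \<noteq> 0\<close> by (intro t_ideal_vcl_subset[OF I]) auto
      ultimately have "s * y ^ k \<in> P" using \<open>I \<subseteq> P\<close> by blast
      then have "y ^ k \<in> P" using prime_ofD(3)[OF prime s(1) power_closed[OF \<open>y \<in> R\<close>]] s(2) by blast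
      then show "y \<in> P" using prime_power_mem[OF prime \<open>y \<in> R\<close>] by blast
    qed
  qed
qed

lemma valuation_localization_t_prime:
  assumes "prime_of R P" "t_ideal R P"
  shows "valuation_domain (localization R P)"
proof -
  obtain M where "M \<in> tMax R" "P \<subseteq> M" using exists_tMax[OF assms(2) prime_ofD(2)[OF assms(1)]] by blast
  then show ?thesis using valuation_domain_mono[OF valuation_tMax localization_antimono] by blast
qed

lemma Eend_subset_Int_localizations:
  assumes I: "t_ideal R I"
  shows "Eend I \<subseteq> (\<Inter>P\<in>Min_primes R I. localization R P) \<inter>
                  \<Inter>{localization R M | M. M \<in> tMax R \<and> \<not> I \<subseteq> M}"
proof
  fix x assume x: "x \<in> Eend I"
  have ideal: "ideal_of R I" using t_idealE(1)[OF I] .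
  have "x \<in> localization R P" if P: "P \<in> Min_primes R I" for P
    using Eend_mem_localization_Min_primes[OF ideal P _ x] valuation_localization_t_prime
      Min_primesD(1)[OF P] t_ideal_Min_primes[OF I P] by blast
  moreover have "x \<in> localization R M" if "M \<in> tMax R" "\<not> I \<subseteq> M" for M
    using colon_mem_localization[OF ideal_ofD(1)[OF ideal] _ tMax_ideal[OF that(1)] that(2)]
      Eend_subset_colon[OF ideal_ofD(1)[OF ideal]] x by blast
  ultimately show "x \<in> (\<Inter>P\<in>Min_primes R I. localization R P) \<inter>
                  \<Inter>{localization R M | M. M \<in> tMax R \<and> \<not> I \<subseteq> M}" by blast
qed

lemma Int_localizations_subset_colon:
  assumes I: "ideal_of R I"
  shows "(\<Inter>P\<in>Min_primes R I. localization R P) \<inter>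
           \<Inter>{localization R M | M. M \<in> tMax R \<and> \<not> I \<subseteq> M} \<subseteq> colon R I"
proof
  fix x assume x: "x \<in> (\<Inter>P\<in>Min_primes R I. localization R P) \<inter>
                         \<Inter>{localization R M | M. M \<in> tMax R \<and> \<not> I \<subseteq> M}"
  then have xS: "\<And>P. P \<in> Min_primes R I \<Longrightarrow> x \<in> localization R P"
    and xT: "\<And>M. M \<in> tMax R \<Longrightarrow> \<not> I \<subseteq> M \<Longrightarrow> x \<in> localization R M"
    by blast+
  show "x \<in> colon R I" unfolding colon_iff
  proof
    fix a assume a: "a \<in> I"
    then have "a \<in> R" using ideal_ofD(1)[OF I] by blast
    show "x * a \<in> R"
    proof (rule mem_if_mem_tMax_localizations)
      fix M assume M: "M \<in> tMax R"
      have prime: "prime_of R M" using tMax_prime[OF M] .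
      show "x * a \<in> localization R M"
      proof (cases "I \<subseteq> M")
        case False
        then have "x \<in> localization R M" using xT M by blast
        then show ?thesis
          using localization_mult[OF prime] subset_localization[OF prime] \<open>a \<in> R\<close> by blast
      next
        case True
        then obtain P where P: "P \<in> Min_primes R I" "P \<subseteq> M"
          using exists_Min_primes_below[OF I prime valuation_tMax[OF M]] by blast
        moreover have "a \<in> P" using Min_primesD(2)[OF P(1)] a by blast
        ultimately show ?thesis
          using mult_mem_localization_below[OF prime valuation_tMax[OF M] Min_primesD(1)[OF P(1)] P(2)
              xS[OF P(1)]] by blast
      qed
    qed
  qed
qed

theorem Eend_strong_t_ideal:
  assumes "strong_ideal R I" "t_ideal R I"
  shows "Eend I = (\<Inter>P\<in>Min_primes R I. localization R P) \<inter>
                  \<Inter>{localization R M | M. M \<in> tMax R \<and> \<not> I \<subseteq> M}"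
proof -
  have ideal: "ideal_of R I" using t_idealE(1)[OF assms(2)] .
  show ?thesis
  proof (rule subset_antisym)
    show "Eend I \<subseteq> (\<Inter>P\<in>Min_primes R I. localization R P) \<inter>
                  \<Inter>{localization R M | M. M \<in> tMax R \<and> \<not> I \<subseteq> M}"
      using Eend_subset_Int_localizations[OF assms(2)] .
    show "(\<Inter>P\<in>Min_primes R I. localization R P) \<inter>
            \<Inter>{localization R M | M. M \<in> tMax R \<and> \<not> I \<subseteq> M} \<subseteq> Eend I"
      using Int_localizations_subset_colon[OF ideal]
      unfolding Eend_eq_colon_if_strong[OF assms(1) ideal_ofD(1)[OF ideal]] .
  qed
qed

subsection \<open>Non-t-invertible t-primes\<close>

context
  fixes P :: "'k set"
  assumes t_prime: "t_prime R P" and not_t_invertible: "\<not> t_invertible R P"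
begin

lemma P_prime: "prime_of R P"
  and P_t_ideal: "t_ideal R P"
  and P_ideal: "ideal_of R P"
  and P_subset: "P \<subseteq> R"
  using t_prime ideal_ofD(1) prime_ofD(1) unfolding t_prime_def by auto

text \<open>As \<open>P\<close> is not t-invertible, \<open>P(R:P)\<close> lies in a t-maximal ideal.\<close>
lemma Eend_eq_colon_t_prime: "Eend P = colon R P"
proof
  show "Eend P \<subseteq> colon R P" using Eend_subset_colon[OF P_subset] .
  define G where "G = {a * b | a b. a \<in> P \<and> b \<in> colon R P}"
  have "G \<subseteq> R" unfolding G_def colon_iff by (auto simp: mult.commute)
  have "1 \<in> colon R P" using P_subset unfolding colon_iff by auto
  then have "P \<subseteq> G" unfolding G_def by force
  then have "P \<subseteq> rspan R G" using rspan_superset by blast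
  obtain a where a: "a \<in> P" "a \<noteq> 0" using t_idealE(3)[OF P_t_ideal] by blast
  have "tcl R (rspan R G) \<noteq> R"
    using not_t_invertible unfolding t_invertible_def prod_sub_def G_def by simp
  then obtain M where M: "M \<in> tMax R" "rspan R G \<subseteq> M"
    using exists_tMax_tcl[OF rspan_ideal[OF \<open>G \<subseteq> R\<close>]] a \<open>P \<subseteq> rspan R G\<close> by blast
  show "colon R P \<subseteq> Eend P"
  proof
    fix x assume x: "x \<in> colon R P"
    have "x * p \<in> P" if p: "p \<in> P" for p
    proof (rule colon_mult_mem_prime[OF tMax_prime[OF M(1)] valuation_tMax[OF M(1)] P_prime _ x p])
      show "P \<subseteq> M" using \<open>P \<subseteq> rspan R G\<close> M(2) by blast
      have "x * p \<in> G" using p x unfolding G_def by (auto simp: mult.commute)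
      then show "x * p \<in> M" using rspan_superset M(2) by blast
    qed
    then show "x \<in> Eend P" by (simp add: Eend_iff)
  qed
qed

lemma colon_t_prime_eq:
  "colon R P = localization R P \<inter> \<Inter>{localization R M | M. M \<in> tMax R \<and> \<not> P \<subseteq> M}"
proof -
  have "(\<Inter>Q\<in>Min_primes R P. localization R Q) = localization R P"
    using Min_primes_prime[OF P_prime] by simp
  then show ?thesis
    using Eend_subset_Int_localizations[OF P_t_ideal] Int_localizations_subset_colon[OF P_ideal]
    unfolding Eend_eq_colon_t_prime by (simp only: subset_antisym)
qed

lemma Eend_t_prime_iff:
  "x \<in> Eend P \<longleftrightarrow> x \<in> localization R P \<and> (\<forall>M\<in>tMax R. \<not> P \<subseteq> M \<longrightarrow> x \<in> localization R M)"
  unfolding Eend_eq_colon_t_prime colon_t_prime_eq by blast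

lemma Eend_notin_t_prime_quotient:
  assumes y: "y \<in> Eend P" "y \<notin> P"
  obtains a u where "a \<in> R" "a \<notin> P" "u \<in> R" "u \<notin> P" "y = a / u"
proof -
  obtain a u where au: "a \<in> R" "u \<in> R" "u \<notin> P" "y = a / u"
    using y(1) Eend_t_prime_iff by (meson localizationE)
  have "a \<notin> P"
  proof
    assume "a \<in> P"
    have "y \<in> R"
    proof (rule mem_if_mem_tMax_localizations)
      fix M assume M: "M \<in> tMax R"
      show "y \<in> localization R M"
      proof (cases "P \<subseteq> M")
        case True
        then show ?thesis using quotient_mem_localization[OF tMax_prime[OF M] valuation_tMax[OF M]
            P_prime True \<open>a \<in> P\<close> au(2,3)] au(4) by simp
      qed (use y(1) M Eend_t_prime_iff in blast)
    qed
    moreover have "y * u = a" using au nonzero_if_notin_ideal[OF P_ideal au(3)] by simp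
    ultimately show False using prime_ofD(3)[OF P_prime] au(2,3) \<open>a \<in> P\<close> y(2) by metis
  qed
  then show ?thesis using that au by blast
qed

lemma t_ideal_Eend_t_prime: "t_ideal (Eend P) P"
proof -
  interpret E: field_subring "Eend P" using subring_Eend[OF P_ideal] by unfold_locales
  obtain p0 where p0: "p0 \<in> P" "p0 \<noteq> 0" using t_idealE(3)[OF P_t_ideal] by blast
  show ?thesis
  proof (rule E.t_idealI[OF ideal_of_Eend[OF P_ideal] p0])
    fix G assume G: "finite G" "G \<subseteq> P" "\<exists>g\<in>G. g \<noteq> 0"
    obtain f0 s where f0: "f0 \<in> G" "f0 \<noteq> 0" and s: "s \<in> R" "s \<notin> P" "\<And>g. g \<in> G \<Longrightarrow> (s / f0) * g \<in> R"
      using valuation_common_denominator[OF P_prime valuation_localization_t_prime[OF P_prime P_t_ideal] G(1,3)]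
      by blast
    show "vcl (Eend P) G \<subseteq> P"
    proof
      fix y assume y: "y \<in> vcl (Eend P) G"
      have "G \<subseteq> Eend P" using G(2) P_subset subset_Eend[OF P_ideal] by blast
      then have "y \<in> Eend P" using E.vcl_subset y by blast
      have "y * (s / f0) \<in> Eend P" using vclD[OF y] s(3) subset_Eend[OF P_ideal] by blast
      then obtain b v where bv: "b \<in> R" "v \<in> R" "v \<notin> P" "y * (s / f0) = b / v"
        using Eend_t_prime_iff by (meson localizationE)
      show "y \<in> P"
      proof (rule ccontr)
        assume "y \<notin> P"
        then obtain a u where au: "a \<in> R" "a \<notin> P" "u \<in> R" "u \<notin> P" "y = a / u"
          using Eend_notin_t_prime_quotient \<open>y \<in> Eend P\<close> by blast
        have "u \<noteq> 0" "v \<noteq> 0" using nonzero_if_notin_ideal[OF P_ideal] au(4) bv(3) by auto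
        then have "a * s * v = b * u * f0" using bv(4) au(5) f0(2) by (simp add: field_simps)
        moreover have "b * u * f0 \<in> P" using ideal_ofD(4)[OF P_ideal mult_closed[OF bv(1) au(3)]] f0(1) G(2) by blast
        moreover have "a * s * v \<notin> P"
          using prime_mult_notin[OF P_prime] mult_closed au(1,2) s(1,2) bv(2,3) by metis
        ultimately show False by simp
      qed
    qed
  qed
qed

text \<open>Every t-maximal ideal not containing \<open>P\<close> misses some element of \<open>F0\<close>, and \<open>y\<close> is a unit
  of \<open>R\<^sub>P\<close>; so \<open>z F \<subseteq> E(P)\<close> puts \<open>z\<close> into \<open>R\<^sub>P\<close> and into all those \<open>R\<^sub>M\<close>.\<close>
lemma colon_Eend_insert_subset:
  assumes F0: "F0 \<subseteq> P" "P \<subseteq> tMax_hull F0" and y: "y \<in> Eend P" "y \<notin> P"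
  shows "colon (Eend P) (insert y F0) \<subseteq> Eend P"
proof
  obtain a u where au: "a \<in> R" "a \<notin> P" "u \<in> R" "u \<notin> P" "y = a / u"
    using Eend_notin_t_prime_quotient[OF y] by blast
  fix z assume z: "z \<in> colon (Eend P) (insert y F0)"
  have "z * y \<in> localization R P" using z Eend_t_prime_iff unfolding colon_iff by blast
  then have "(z * y) * u / a \<in> localization R P"
    using localization_divide[OF P_prime] localization_mult[OF P_prime] subset_localization[OF P_prime] au
    by blast
  moreover have "(z * y) * u / a = z"
    using au(5) nonzero_if_notin_ideal[OF P_ideal] au(2,4) by simp
  ultimately have "z \<in> localization R P" by simp
  moreover have "z \<in> localization R M" if M: "M \<in> tMax R" "\<not> P \<subseteq> M" for M
  proof -
    obtain f where f: "f \<in> F0" "f \<notin> M" using F0(2) M unfolding tMax_hull_def by blast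
    then have "f \<in> R" "f \<noteq> 0" using F0(1) P_subset ideal_ofD(2)[OF tMax_ideal[OF M(1)]] by auto
    have "z * f \<in> localization R M" using z f(1) M Eend_t_prime_iff unfolding colon_iff by blast
    then have "(z * f) / f \<in> localization R M"
      using localization_divide[OF tMax_prime[OF M(1)]] \<open>f \<in> R\<close> f(2) by blast
    then show ?thesis using \<open>f \<noteq> 0\<close> by simp
  qed
  ultimately show "z \<in> Eend P" using Eend_t_prime_iff by blast
qed

theorem t_prime_tMax_Eend:
  assumes acc: "acc_radical_t R"
  shows "P \<in> tMax (Eend P)"
proof -
  interpret E: field_subring "Eend P" using subring_Eend[OF P_ideal] by unfold_locales
  obtain F0 where F0: "finite F0" "F0 \<subseteq> P" "\<exists>f\<in>F0. f \<noteq> 0" "P \<subseteq> tMax_hull F0"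
    by (rule acc_radical_t_finite_hull[OF acc P_t_ideal])
  have maximal: "N = P" if N: "t_ideal (Eend P) N" "N \<noteq> Eend P" "P \<subseteq> N" for N
  proof (rule ccontr)
    assume "N \<noteq> P"
    then obtain y where y: "y \<in> N" "y \<notin> P" using N(3) by blast
    have ideal: "ideal_of (Eend P) N" using t_idealE(1)[OF N(1)] .
    have "y \<in> Eend P" using y(1) ideal_ofD(1)[OF ideal] by blast
    have "y \<noteq> 0" using nonzero_if_notin_ideal[OF P_ideal y(2)] .
    have "colon (Eend P) (insert y F0) \<subseteq> Eend P"
      using colon_Eend_insert_subset[OF F0(2,4) \<open>y \<in> Eend P\<close> y(2)] .
    then have "1 \<in> vcl (Eend P) (insert y F0)" using one_in_vcl_iff by blast
    moreover have "vcl (Eend P) (insert y F0) \<subseteq> N"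
    proof (rule E.t_ideal_vcl_subset[OF N(1)])
      show "finite (insert y F0)" using F0(1) by simp
      show "insert y F0 \<subseteq> N" using y(1) F0(2) N(3) by blast
      show "\<exists>f\<in>insert y F0. f \<noteq> 0" using \<open>y \<noteq> 0\<close> by blast
    qed
    ultimately have "1 \<in> N" by blast
    then show False using E.ideal_eq_carrier_if_one[OF ideal] N(2) by blast
  qed
  have "1 \<notin> P" using prime_one_notin[OF P_prime] .
  then have "P \<noteq> Eend P" using subset_Eend[OF P_ideal] one_closed by blast
  then show ?thesis unfolding tMax_def using t_ideal_Eend_t_prime maximal by blast
qed

end

end

theorem proposition1p6:
  fixes R :: "'k::field set"
  assumes dom: "domain_with_qf R" and notK: "R \<noteq> UNIV" and pvmd: "PvMD R"
  shows
   "(\<forall>I. strong_ideal R I \<and> t_ideal R I \<longrightarrow>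
        Eend I = (\<Inter>P\<in>Min_primes R I. localization R P) \<inter>
                 \<Inter>{localization R M | M. M \<in> tMax R \<and> \<not> I \<subseteq> M})
    \<and> (\<forall>P. t_prime R P \<and> \<not> t_invertible R P \<longrightarrow>
        Eend P = colon R P \<and>
        colon R P = localization R P \<inter>
                 \<Inter>{localization R M | M. M \<in> tMax R \<and> \<not> P \<subseteq> M})
    \<and> (\<forall>P. t_prime R P \<and> \<not> t_invertible R P \<and> acc_radical_t R \<longrightarrow>
        P \<in> tMax (Eend P))"
proof -
  interpret pvmd R using pvmd by (rule pvmd.intro)
  show ?thesis
  proof (intro conjI allI impI)
    fix I assume "strong_ideal R I \<and> t_ideal R I"
    then show "Eend I = (\<Inter>P\<in>Min_primes R I. localization R P) \<inter>
                 \<Inter>{localization R M | M. M \<in> tMax R \<and> \<not> I \<subseteq> M}"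
      by (intro Eend_strong_t_ideal) auto
  next
    fix P assume "t_prime R P \<and> \<not> t_invertible R P"
    then show "Eend P = colon R P"
      by (intro Eend_eq_colon_t_prime) auto
  next
    fix P assume "t_prime R P \<and> \<not> t_invertible R P"
    then show "colon R P = localization R P \<inter> \<Inter>{localization R M | M. M \<in> tMax R \<and> \<not> P \<subseteq> M}"
      by (intro colon_t_prime_eq) auto
  next
    fix P assume "t_prime R P \<and> \<not> t_invertible R P \<and> acc_radical_t R"
    then show "P \<in> tMax (Eend P)"
      by (intro t_prime_tMax_Eend) auto
  qed
qed

end
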